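(* Let $\mathcal{M}=(M,\mathcal{C})$ be a $\beta$-model of MK$^*$ and let $(M_0,R)$ be a coding pair in $\mathcal{M}$. Then the quotient structure $(\tilde M_0,\tilde R)$ is extensional and well-founded.
   Context: MK$^*$ is Morse–Kelley class theory (two-sorted: sets and classes; models $(M,\mathcal{C})$ with $M$ a transitive ZFC model, $\mathcal{C}\subseteq\mathcal{P}(M)$; axioms include Class Comprehension for all two-sorted formulas and Global Choice, a class well-ordering of $M$) plus Class-Bounding $\forall x\,\exists A\,\varphi(x,A)\to\exists B\,\forall x\,\exists y\,\varphi(x,(B)_y)$, $(B)_y=\{z:(y,z)\in B\}$. A $\beta$-model: classes are well-founded in the model iff truly well-founded. A coding pair is $(M_0,R)$ with $M_0\in\mathcal{C}$ having a distinguished element $a$ and $R\in\mathcal{C}$ a binary relation on $M_0$ such that: (a) each $z\in M_0$ has a unique $n$ such that there is an $R$-chain $zRz_{n-1}R\cdots Rz_1Ra$; (b) if $y\neq z$, $yRx$, $zRx$ then $(M_0,R)\restriction y\not\cong(M_0,R)\restriction z$, where $(M_0,R)\restriction y$ is $y$ together with all elements connected to $y$ by an $R$-chain, with $R$ restricted; (c) if $y\neq z$ have the same $R$-distance from $a$ then $vRy\to\neg(vRz)$; (d) $R$ is well-founded. The quotient: for $b\in M_0$ let $[b]=\{b'\in M_0:(M_0,R)\restriction b'\cong(M_0,R)\restriction b\}$, let $\tilde b$ be a representative of $[b]$ chosen via the global well-order, $\tilde M_0=\{\tilde b:b\in M_0\}$, and $\tilde b\,\tilde R\,\tilde c$ iff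 there exist $b_0\in[b]$, $c_0\in[c]$ with $b_0Rc_0$. *)

theory Defs
  imports Main
begin

text \<open>The ambient universe V is modelled by a type 'a with a (truly well-founded)
membership relation E, where E x y means x is an element of y.  A model of MK is a
pair (M, C) with M a transitive set of the universe and C a collection of subsets of M.\<close>

definition transitive_in :: "('a \<Rightarrow> 'a \<Rightarrow> bool) \<Rightarrow> 'a set \<Rightarrow> bool" where
  "transitive_in E M \<longleftrightarrow> (\<forall>x\<in>M. \<forall>y. E y x \<longrightarrow> y \<in> M)"

definition upair :: "('a \<Rightarrow> 'a \<Rightarrow> bool) \<Rightarrow> 'a set \<Rightarrow> 'a \<Rightarrow> 'a \<Rightarrow> 'a" where
  "upair E M x y = (THE u. u \<in> M \<and> (\<forall>w\<in>M. E w u \<longleftrightarrow> (w = x \<or> w = y)))"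

definition kpair :: "('a \<Rightarrow> 'a \<Rightarrow> bool) \<Rightarrow> 'a set \<Rightarrow> 'a \<Rightarrow> 'a \<Rightarrow> 'a" where
  "kpair E M x y = upair E M (upair E M x x) (upair E M x y)"

definition crel :: "('a \<Rightarrow> 'a \<Rightarrow> bool) \<Rightarrow> 'a set \<Rightarrow> 'a set \<Rightarrow> ('a \<times> 'a) set" where
  "crel E M R = {(x, y). x \<in> M \<and> y \<in> M \<and> kpair E M x y \<in> R}"

definition slice :: "('a \<Rightarrow> 'a \<Rightarrow> bool) \<Rightarrow> 'a set \<Rightarrow> 'a set \<Rightarrow> 'a \<Rightarrow> 'a set" where
  "slice E M B y = {z \<in> M. kpair E M y z \<in> B}"

datatype fm =
    SMem nat nat
  | SEq nat nat
  | CMem nat nat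
  | Neg fm
  | Conj fm fm
  | ExS nat fm
  | ExC nat fm

fun sat :: "('a \<Rightarrow> 'a \<Rightarrow> bool) \<Rightarrow> 'a set \<Rightarrow> 'a set set
             \<Rightarrow> (nat \<Rightarrow> 'a) \<Rightarrow> (nat \<Rightarrow> 'a set) \<Rightarrow> fm \<Rightarrow> bool" where
  "sat E M C s c (SMem i j) = E (s i) (s j)"
| "sat E M C s c (SEq i j) = (s i = s j)"
| "sat E M C s c (CMem i J) = (s i \<in> c J)"
| "sat E M C s c (Neg \<phi>) = (\<not> sat E M C s c \<phi>)"
| "sat E M C s c (Conj \<phi> \<psi>) = (sat E M C s c \<phi> \<and> sat E M C s c \<psi>)"
| "sat E M C s c (ExS i \<phi>) = (\<exists>u\<in>M. sat E M C (s(i := u)) c \<phi>)"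
| "sat E M C s c (ExC J \<phi>) = (\<exists>A\<in>C. sat E M C s (c(J := A)) \<phi>)"

definition assignment :: "'a set \<Rightarrow> 'a set set \<Rightarrow> (nat \<Rightarrow> 'a) \<Rightarrow> (nat \<Rightarrow> 'a set) \<Rightarrow> bool" where
  "assignment M C s c \<longleftrightarrow> range s \<subseteq> M \<and> range c \<subseteq> C"

definition model_wf :: "('a \<Rightarrow> 'a \<Rightarrow> bool) \<Rightarrow> 'a set \<Rightarrow> 'a set set \<Rightarrow> 'a set \<Rightarrow> bool" where
  "model_wf E M C R \<longleftrightarrow>
     (\<forall>X\<in>C. X \<noteq> {} \<longrightarrow> (\<exists>x\<in>X. \<forall>y\<in>X. (y, x) \<notin> crel E M R))"

definition global_wo :: "('a \<Rightarrow> 'a \<Rightarrow> bool) \<Rightarrow> 'a set \<Rightarrow> 'a set set \<Rightarrow> 'a set \<Rightarrow> bool" where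
  "global_wo E M C W \<longleftrightarrow> W \<in> C \<and>
     (\<forall>x\<in>M. (x, x) \<notin> crel E M W) \<and>
     (\<forall>x\<in>M. \<forall>y\<in>M. \<forall>z\<in>M. (x, y) \<in> crel E M W \<longrightarrow> (y, z) \<in> crel E M W \<longrightarrow> (x, z) \<in> crel E M W) \<and>
     (\<forall>x\<in>M. \<forall>y\<in>M. x \<noteq> y \<longrightarrow> (x, y) \<in> crel E M W \<or> (y, x) \<in> crel E M W) \<and>
     model_wf E M C W"

definition MK_star :: "('a \<Rightarrow> 'a \<Rightarrow> bool) \<Rightarrow> 'a set \<Rightarrow> 'a set set \<Rightarrow> bool" where
  "MK_star E M C \<longleftrightarrow>
     \<comment> \<open>classes are subclasses of M\<close>
     (\<forall>X\<in>C. X \<subseteq> M) \<and>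
     \<comment> \<open>Set Extensionality\<close>
     (\<forall>x\<in>M. \<forall>y\<in>M. (\<forall>z\<in>M. E z x \<longleftrightarrow> E z y) \<longrightarrow> x = y) \<and>
     \<comment> \<open>Empty set\<close>
     (\<exists>e\<in>M. \<forall>z\<in>M. \<not> E z e) \<and>
     \<comment> \<open>Pairing\<close>
     (\<forall>x\<in>M. \<forall>y\<in>M. \<exists>p\<in>M. \<forall>z\<in>M. E z p \<longleftrightarrow> (z = x \<or> z = y)) \<and>
     \<comment> \<open>Union\<close>
     (\<forall>x\<in>M. \<exists>u\<in>M. \<forall>z\<in>M. E z u \<longleftrightarrow> (\<exists>y\<in>M. E z y \<and> E y x)) \<and>
     \<comment> \<open>Power set\<close>
     (\<forall>x\<in>M. \<exists>p\<in>M. \<forall>z\<in>M. E z p \<longleftrightarrow> (\<forall>w\<in>M. E w z \<longrightarrow> E w x)) \<and>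
     \<comment> \<open>Infinity\<close>
     (\<exists>x\<in>M. (\<exists>e\<in>M. E e x \<and> (\<forall>z\<in>M. \<not> E z e)) \<and>
        (\<forall>y\<in>M. E y x \<longrightarrow> (\<exists>t\<in>M. E t x \<and> (\<forall>w\<in>M. E w t \<longleftrightarrow> (E w y \<or> w = y))))) \<and>
     \<comment> \<open>Foundation\<close>
     (\<forall>x\<in>M. (\<exists>y\<in>M. E y x) \<longrightarrow> (\<exists>y\<in>M. E y x \<and> (\<forall>z\<in>M. E z y \<longrightarrow> \<not> E z x))) \<and>
     \<comment> \<open>Separation (with class parameters): the intersection of a set with a class is a set\<close>
     (\<forall>X\<in>C. \<forall>a\<in>M. \<exists>b\<in>M. \<forall>z\<in>M. E z b \<longleftrightarrow> (E z a \<and> z \<in> X)) \<and>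
     \<comment> \<open>Replacement: the image of a set under a class function is contained in a set\<close>
     (\<forall>F\<in>C. (\<forall>x\<in>M. \<forall>y\<in>M. \<forall>y'\<in>M. kpair E M x y \<in> F \<longrightarrow> kpair E M x y' \<in> F \<longrightarrow> y = y') \<longrightarrow>
        (\<forall>a\<in>M. \<exists>b\<in>M. \<forall>x\<in>M. \<forall>y\<in>M. E x a \<longrightarrow> kpair E M x y \<in> F \<longrightarrow> E y b)) \<and>
     \<comment> \<open>Class Extensionality\<close>
     (\<forall>X\<in>C. \<forall>Y\<in>C. (\<forall>z\<in>M. z \<in> X \<longleftrightarrow> z \<in> Y) \<longrightarrow> X = Y) \<and>
     \<comment> \<open>Class Comprehension for all two-sorted formulas, with parameters\<close>
     (\<forall>\<phi> x s c. assignment M C s c \<longrightarrow>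
        (\<exists>X\<in>C. \<forall>u\<in>M. u \<in> X \<longleftrightarrow> sat E M C (s(x := u)) c \<phi>)) \<and>
     \<comment> \<open>Global Choice\<close>
     (\<exists>W. global_wo E M C W) \<and>
     \<comment> \<open>Class-Bounding\<close>
     (\<forall>\<phi> x A s c. assignment M C s c \<longrightarrow>
        (\<forall>u\<in>M. \<exists>A'\<in>C. sat E M C (s(x := u)) (c(A := A')) \<phi>) \<longrightarrow>
        (\<exists>B\<in>C. \<forall>u\<in>M. \<exists>v\<in>M. sat E M C (s(x := u)) (c(A := slice E M B v)) \<phi>))"

definition beta_model :: "('a \<Rightarrow> 'a \<Rightarrow> bool) \<Rightarrow> 'a set \<Rightarrow> 'a set set \<Rightarrow> bool" where
  "beta_model E M C \<longleftrightarrow> (\<forall>R\<in>C. model_wf E M C R \<longleftrightarrow> wf (crel E M R))"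

definition restr :: "('a \<Rightarrow> 'a \<Rightarrow> bool) \<Rightarrow> 'a set \<Rightarrow> 'a set \<Rightarrow> 'a set \<Rightarrow> 'a \<Rightarrow> 'a set" where
  "restr E M M0 R y = {v \<in> M0. (v, y) \<in> (crel E M R \<inter> (M0 \<times> M0))\<^sup>*}"

definition iso_in :: "('a \<Rightarrow> 'a \<Rightarrow> bool) \<Rightarrow> 'a set \<Rightarrow> 'a set set \<Rightarrow> 'a set \<Rightarrow> 'a set
                      \<Rightarrow> 'a \<Rightarrow> 'a \<Rightarrow> bool" where
  "iso_in E M C M0 R y z \<longleftrightarrow>
     (\<exists>F\<in>C.
        (\<forall>p\<in>F. \<exists>u\<in>restr E M M0 R y. \<exists>v\<in>restr E M M0 R z. p = kpair E M u v) \<and>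
        (\<forall>u\<in>restr E M M0 R y. \<exists>!v. v \<in> restr E M M0 R z \<and> kpair E M u v \<in> F) \<and>
        (\<forall>v\<in>restr E M M0 R z. \<exists>!u. u \<in> restr E M M0 R y \<and> kpair E M u v \<in> F) \<and>
        (\<forall>u\<in>restr E M M0 R y. \<forall>u'\<in>restr E M M0 R y.
         \<forall>v\<in>restr E M M0 R z. \<forall>v'\<in>restr E M M0 R z.
           kpair E M u v \<in> F \<longrightarrow> kpair E M u' v' \<in> F \<longrightarrow>
           (kpair E M u u' \<in> R \<longleftrightarrow> kpair E M v v' \<in> R)))"

definition rdist :: "('a \<Rightarrow> 'a \<Rightarrow> bool) \<Rightarrow> 'a set \<Rightarrow> 'a set \<Rightarrow> 'a set \<Rightarrow> 'a \<Rightarrow> 'a \<Rightarrow> nat \<Rightarrow> bool" where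
  "rdist E M M0 R a z n \<longleftrightarrow> (z, a) \<in> (crel E M R \<inter> (M0 \<times> M0)) ^^ n"

definition coding_pair :: "('a \<Rightarrow> 'a \<Rightarrow> bool) \<Rightarrow> 'a set \<Rightarrow> 'a set set \<Rightarrow> 'a set \<Rightarrow> 'a set \<Rightarrow> 'a \<Rightarrow> bool" where
  "coding_pair E M C M0 R a \<longleftrightarrow>
     M0 \<in> C \<and> R \<in> C \<and> a \<in> M0 \<and>
     \<comment> \<open>R is a binary relation on M0\<close>
     (\<forall>p\<in>R. \<exists>x\<in>M0. \<exists>y\<in>M0. p = kpair E M x y) \<and>
     \<comment> \<open>(a)\<close>
     (\<forall>z\<in>M0. \<exists>!n. rdist E M M0 R a z n) \<and>
     \<comment> \<open>(b)\<close>
     (\<forall>x\<in>M0. \<forall>y\<in>M0. \<forall>z\<in>M0. y \<noteq> z \<longrightarrow> (y, x) \<in> crel E M R \<longrightarrow> (z, x) \<in> crel E M R \<longrightarrow>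
        \<not> iso_in E M C M0 R y z) \<and>
     \<comment> \<open>(c)\<close>
     (\<forall>y\<in>M0. \<forall>z\<in>M0. \<forall>v\<in>M0. \<forall>n. y \<noteq> z \<longrightarrow> rdist E M M0 R a y n \<longrightarrow> rdist E M M0 R a z n \<longrightarrow>
        (v, y) \<in> crel E M R \<longrightarrow> (v, z) \<notin> crel E M R) \<and>
     \<comment> \<open>(d): R is well-founded (in the model)\<close>
     model_wf E M C R"

definition iso_class :: "('a \<Rightarrow> 'a \<Rightarrow> bool) \<Rightarrow> 'a set \<Rightarrow> 'a set set \<Rightarrow> 'a set \<Rightarrow> 'a set \<Rightarrow> 'a \<Rightarrow> 'a set" where
  "iso_class E M C M0 R b = {b' \<in> M0. iso_in E M C M0 R b' b}"

definition rep :: "('a \<Rightarrow> 'a \<Rightarrow> bool) \<Rightarrow> 'a set \<Rightarrow> 'a set set \<Rightarrow> 'a set \<Rightarrow> 'a set \<Rightarrow> 'a set \<Rightarrow> 'a \<Rightarrow> 'a" where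
  "rep E M C W M0 R b = (THE c. c \<in> iso_class E M C M0 R b \<and>
       (\<forall>d\<in>iso_class E M C M0 R b. d \<noteq> c \<longrightarrow> (c, d) \<in> crel E M W))"

definition qcarrier :: "('a \<Rightarrow> 'a \<Rightarrow> bool) \<Rightarrow> 'a set \<Rightarrow> 'a set set \<Rightarrow> 'a set \<Rightarrow> 'a set \<Rightarrow> 'a set \<Rightarrow> 'a set" where
  "qcarrier E M C W M0 R = rep E M C W M0 R ` M0"

definition qrel :: "('a \<Rightarrow> 'a \<Rightarrow> bool) \<Rightarrow> 'a set \<Rightarrow> 'a set set \<Rightarrow> 'a set \<Rightarrow> 'a set \<Rightarrow> 'a set \<Rightarrow> ('a \<times> 'a) set" where
  "qrel E M C W M0 R = {(x, y). x \<in> qcarrier E M C W M0 R \<and> y \<in> qcarrier E M C W M0 R \<and>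
      (\<exists>b0\<in>iso_class E M C M0 R x. \<exists>c0\<in>iso_class E M C M0 R y. (b0, c0) \<in> crel E M R)}"

definition extensional_rel :: "'a set \<Rightarrow> ('a \<times> 'a) set \<Rightarrow> bool" where
  "extensional_rel A S \<longleftrightarrow>
     (\<forall>x\<in>A. \<forall>y\<in>A. (\<forall>v\<in>A. (v, x) \<in> S \<longleftrightarrow> (v, y) \<in> S) \<longrightarrow> x = y)"

end

theory Submission
  imports Defs
begin

text \<open>Write S for the relation coded by R.  The coding-pair axioms make S a forest: it is
  well-founded (the model is a beta-model) and every node has a single parent.  The central
  fact is that a class-coded isomorphism between the subtrees below p and q exists exactly when
  a true isomorphism g does.  This is shown by well-founded induction on p: inductively, every
  child y of p has a class isomorphism onto g y, and by condition (b) no two siblings below p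
  are isomorphic, so these class isomorphisms are unique, agree with g, and their union (a class
  by comprehension over classes) codes g.  Hence distinct siblings are never isomorphic at all.
  Well-foundedness of the quotient follows from that of S, because subtree isomorphisms carry
  children to children.  Extensionality follows by gluing isomorphisms of matched children into
  one of the parents; non-isomorphic siblings make the matching a bijection.\<close>

section \<open>Isomorphisms between subsets of a relation\<close>

definition rel_iso_betw :: "('a \<times> 'a) set \<Rightarrow> ('a \<Rightarrow> 'a) \<Rightarrow> 'a set \<Rightarrow> 'a set \<Rightarrow> bool" where
  "rel_iso_betw r f A B \<longleftrightarrow> bij_betw f A B \<and> (\<forall>x\<in>A. \<forall>y\<in>A. (x, y) \<in> r \<longleftrightarrow> (f x, f y) \<in> r)"

lemma rel_iso_betw_id: "rel_iso_betw r id A A"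
  unfolding rel_iso_betw_def by simp

lemma rel_iso_betw_mem: "rel_iso_betw r f A B \<Longrightarrow> x \<in> A \<Longrightarrow> f x \<in> B"
  unfolding rel_iso_betw_def using bij_betwE by blast

lemma rel_iso_betw_rel_iff:
  "rel_iso_betw r f A B \<Longrightarrow> x \<in> A \<Longrightarrow> y \<in> A \<Longrightarrow> (f x, f y) \<in> r \<longleftrightarrow> (x, y) \<in> r"
  unfolding rel_iso_betw_def by blast

lemma rel_iso_betw_inj_on: "rel_iso_betw r f A B \<Longrightarrow> inj_on f A"
  unfolding rel_iso_betw_def bij_betw_def by blast

lemma rel_iso_betw_image: "rel_iso_betw r f A B \<Longrightarrow> f ` A = B"
  unfolding rel_iso_betw_def bij_betw_def by blast

lemma rel_iso_betw_inv_into: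
  assumes "rel_iso_betw r f A B"
  shows "rel_iso_betw r (inv_into A f) B A"
proof -
  have bij: "bij_betw f A B"
    using assms unfolding rel_iso_betw_def by blast
  have "(inv_into A f x, inv_into A f y) \<in> r \<longleftrightarrow> (x, y) \<in> r" if "x \<in> B" "y \<in> B" for x y
    using rel_iso_betw_rel_iff[OF assms, of "inv_into A f x" "inv_into A f y"] that bij
    by (simp add: bij_betw_inv_into_right bij_betw_imp_surj_on inv_into_into)
  then show ?thesis
    using bij_betw_inv_into[OF bij] unfolding rel_iso_betw_def by blast
qed

lemma rel_iso_betw_comp:
  assumes "rel_iso_betw r f A B" "rel_iso_betw r g B D"
  shows "rel_iso_betw r (g \<circ> f) A D"
  using assms bij_betw_trans rel_iso_betw_mem[OF assms(1)] unfolding rel_iso_betw_def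
  by (metis comp_apply)

lemma rel_iso_betw_subset:
  assumes "rel_iso_betw r f A B" "A' \<subseteq> A"
  shows "rel_iso_betw r f A' (f ` A')"
  using assms inj_on_subset unfolding rel_iso_betw_def bij_betw_def by blast

section \<open>Subtrees of a forest\<close>

text \<open>(t, p) \<in> S means that t is a child of p, so below p is the subtree rooted at p.\<close>

locale forest =
  fixes S :: "('a \<times> 'a) set"
  assumes wf_S: "wf S"
    and single_valued_S: "single_valued S"
begin

definition below :: "'a \<Rightarrow> 'a set" where
  "below p = {t. (t, p) \<in> S\<^sup>*}"

definition subtree_iso :: "'a \<Rightarrow> 'a \<Rightarrow> bool" where
  "subtree_iso p q \<longleftrightarrow> (\<exists>f. rel_iso_betw S f (below p) (below q))"

definition rigid_below :: "'a \<Rightarrow> bool" where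
  "rigid_below p \<longleftrightarrow>
     (\<forall>t\<in>below p. \<forall>s s'. (s, t) \<in> S \<longrightarrow> (s', t) \<in> S \<longrightarrow> subtree_iso s s' \<longrightarrow> s = s')"

lemma in_below_iff: "t \<in> below p \<longleftrightarrow> (t, p) \<in> S\<^sup>*"
  unfolding below_def by simp

lemma below_self [simp]: "p \<in> below p"
  by (simp add: in_below_iff)

lemma below_mono: "t \<in> below p \<Longrightarrow> below t \<subseteq> below p"
  unfolding below_def by (auto intro: rtrancl_trans)

lemma child_in_below: "(c, t) \<in> S \<Longrightarrow> t \<in> below p \<Longrightarrow> c \<in> below p"
  by (simp add: in_below_iff converse_rtrancl_into_rtrancl)

lemma parent_notin_below:
  assumes "(c, p) \<in> S"
  shows "p \<notin> below c"
proof
  assume "p \<in> below c"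
  then have "(p, p) \<in> S\<^sup>+"
    using assms by (simp add: in_below_iff rtrancl_into_trancl1)
  then show False
    using wf_acyclic[OF wf_S] by (simp add: acyclic_def)
qed

lemma below_cases:
  assumes "t \<in> below p" "t \<noteq> p"
  obtains c where "(c, p) \<in> S" "t \<in> below c"
  using assms unfolding in_below_iff by (metis rtranclE)

lemma has_parent_in_below:
  assumes "t \<in> below p" "t \<noteq> p"
  obtains y where "(t, y) \<in> S" "y \<in> below p"
  using assms unfolding in_below_iff by (metis converse_rtranclE)

lemma ancestors_linear: "(t, x) \<in> S\<^sup>* \<Longrightarrow> (t, y) \<in> S\<^sup>* \<Longrightarrow> (x, y) \<in> S\<^sup>* \<or> (y, x) \<in> S\<^sup>*"
proof (induction arbitrary: y rule: converse_rtrancl_induct)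
  case base
  then show ?case by blast
next
  case (step t t')
  from step.prems show ?case
  proof (cases rule: converse_rtranclE)
    case base
    then show ?thesis using converse_rtrancl_into_rtrancl[OF step.hyps] by simp
  next
    case (step t'')
    then have "t'' = t'"
      using single_valuedD[OF single_valued_S] \<open>(t, t') \<in> S\<close> by blast
    then show ?thesis using step.IH step by blast
  qed
qed

lemma siblings_below_eq:
  assumes "(c, p) \<in> S" "(c', p) \<in> S" "c \<in> below c'"
  shows "c = c'"
proof -
  have "(c, c') \<in> S\<^sup>*"
    using assms(3) by (simp add: in_below_iff)
  then show ?thesis
  proof (cases rule: converse_rtranclE)
    case (step y)
    then have "y = p"
      using single_valuedD[OF single_valued_S] assms(1) by blast
    then show ?thesis
      using step(2) parent_notin_below[OF assms(2)] by (simp add: in_below_iff)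
  qed simp
qed

lemma below_siblings_disjoint:
  assumes "(c, p) \<in> S" "(c', p) \<in> S" "t \<in> below c" "t \<in> below c'"
  shows "c = c'"
proof -
  have "(c, c') \<in> S\<^sup>* \<or> (c', c) \<in> S\<^sup>*"
    using assms(3,4) by (simp add: in_below_iff ancestors_linear)
  then show ?thesis
    using siblings_below_eq[OF assms(1,2)] siblings_below_eq[OF assms(2,1)]
    by (auto simp: in_below_iff)
qed

lemma finite_ancestors:
  assumes "(t, r) \<in> S ^^ n" "\<And>z. (r, z) \<notin> S"
  shows "finite {z. (t, z) \<in> S\<^sup>*}"
  using assms(1)
proof (induction n arbitrary: t)
  case 0
  have "z = r" if "(r, z) \<in> S\<^sup>*" for z
    using that assms(2) by (cases rule: converse_rtranclE) auto
  then have "{z. (t, z) \<in> S\<^sup>*} = {r}"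
    using 0 by auto
  then show ?case by simp
next
  case (Suc n)
  then obtain t' where t': "(t, t') \<in> S" "(t', r) \<in> S ^^ n"
    by (meson relpow_Suc_D2)
  have "{z. (t, z) \<in> S\<^sup>*} \<subseteq> insert t {z. (t', z) \<in> S\<^sup>*}"
  proof
    fix z assume "z \<in> {z. (t, z) \<in> S\<^sup>*}"
    then have "(t, z) \<in> S\<^sup>*" by simp
    then show "z \<in> insert t {z. (t', z) \<in> S\<^sup>*}"
    proof (cases rule: converse_rtranclE)
      case (step y)
      then have "y = t'"
        using single_valuedD[OF single_valued_S] t'(1) by blast
      then show ?thesis using step(2) by simp
    qed simp
  qed
  moreover have "finite (insert t {z. (t', z) \<in> S\<^sup>*})"
    using Suc.IH[OF t'(2)] by simp
  ultimately show ?case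
    by (rule finite_subset)
qed

lemma iso_root:
  assumes f: "rel_iso_betw S f (below p) (below q)"
  shows "f p = q"
proof (rule ccontr)
  assume "f p \<noteq> q"
  with rel_iso_betw_mem[OF f below_self]
  obtain y where y: "(f p, y) \<in> S" "y \<in> below q"
    by (rule has_parent_in_below)
  from y(2) obtain x where x: "x \<in> below p" "y = f x"
    unfolding rel_iso_betw_image[OF f, symmetric] ..
  then have "(p, x) \<in> S"
    using y(1) rel_iso_betw_rel_iff[OF f below_self x(1)] by simp
  then show False
    using x(1) parent_notin_below by blast
qed

lemma iso_below_mono:
  assumes f: "rel_iso_betw S f (below p) B" and t: "t \<in> below p" and "x \<in> below t"
  shows "f x \<in> below (f t)"
proof -
  from \<open>x \<in> below t\<close> have "(x, t) \<in> S\<^sup>*" by (simp add: in_below_iff)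
  then show ?thesis
  proof (induction rule: converse_rtrancl_induct)
    case base
    show ?case by simp
  next
    case (step x x')
    have "x' \<in> below t"
      using step.hyps(2) by (simp add: in_below_iff)
    then have "x \<in> below t"
      by (rule child_in_below[OF step.hyps(1)])
    then have "(f x, f x') \<in> S"
      using rel_iso_betw_rel_iff[OF f] step.hyps(1) below_mono[OF t] \<open>x' \<in> below t\<close> by blast
    then show ?case
      using step.IH by (rule child_in_below)
  qed
qed

lemma iso_restrict:
  assumes f: "rel_iso_betw S f (below p) (below q)" and t: "t \<in> below p"
  shows "rel_iso_betw S f (below t) (below (f t))"
proof -
  let ?g = "inv_into (below p) f"
  have g: "rel_iso_betw S ?g (below q) (below p)"
    using rel_iso_betw_inv_into[OF f] .
  have ft: "f t \<in> below q" "?g (f t) = t"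
    using rel_iso_betw_mem[OF f t] inv_into_f_f[OF rel_iso_betw_inj_on[OF f] t] by auto
  have "below (f t) \<subseteq> f ` below t"
  proof
    fix z assume z: "z \<in> below (f t)"
    then have "z \<in> below q"
      using below_mono[OF ft(1)] by blast
    then have "?g z \<in> below t" "f (?g z) = z"
      using iso_below_mono[OF g ft(1) z] ft(2) rel_iso_betw_image[OF f] f_inv_into_f[of z f "below p"]
      by simp_all
    then show "z \<in> f ` below t" by (metis image_eqI)
  qed
  moreover have "f ` below t \<subseteq> below (f t)"
    using iso_below_mono[OF f t] by blast
  ultimately show ?thesis
    using rel_iso_betw_subset[OF f below_mono[OF t]] by (simp add: subset_antisym)
qed

lemma subtree_iso_refl: "subtree_iso p p"
  unfolding subtree_iso_def using rel_iso_betw_id by blast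

lemma subtree_iso_sym: "subtree_iso p q \<Longrightarrow> subtree_iso q p"
  unfolding subtree_iso_def using rel_iso_betw_inv_into by blast

lemma subtree_iso_trans: "subtree_iso p q \<Longrightarrow> subtree_iso q r \<Longrightarrow> subtree_iso p r"
  unfolding subtree_iso_def using rel_iso_betw_comp by blast

lemma subtree_iso_at:
  "rel_iso_betw S f (below p) (below q) \<Longrightarrow> t \<in> below p \<Longrightarrow> subtree_iso t (f t)"
  unfolding subtree_iso_def using iso_restrict by blast

lemma subtree_iso_child:
  assumes "(b, c) \<in> S" "subtree_iso c y"
  obtains d where "(d, y) \<in> S" "subtree_iso b d"
proof -
  obtain f where f: "rel_iso_betw S f (below c) (below y)"
    using assms(2) unfolding subtree_iso_def by blast
  have b: "b \<in> below c"
    using child_in_below[OF assms(1) below_self] .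
  have "(f b, y) \<in> S"
    using rel_iso_betw_rel_iff[OF f b below_self] assms(1) iso_root[OF f] by simp
  then show ?thesis
    using that subtree_iso_at[OF f b] by blast
qed


lemma rigid_below_mono: "rigid_below p \<Longrightarrow> t \<in> below p \<Longrightarrow> rigid_below t"
  unfolding rigid_below_def using below_mono by blast

lemma rigid_below_iso:
  assumes p: "rigid_below p" and "subtree_iso p q"
  shows "rigid_below q"
  unfolding rigid_below_def
proof (intro ballI allI impI)
  fix t s s' assume t: "t \<in> below q" and s: "(s, t) \<in> S" "(s', t) \<in> S" "subtree_iso s s'"
  obtain f where "rel_iso_betw S f (below p) (below q)"
    using \<open>subtree_iso p q\<close> unfolding subtree_iso_def by blast
  then have g: "rel_iso_betw S (inv_into (below p) f) (below q) (below p)" (is "rel_iso_betw S ?g _ _")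
    by (rule rel_iso_betw_inv_into)
  have below_q: "s \<in> below q" "s' \<in> below q"
    using child_in_below t s by blast+
  have "(?g s, ?g t) \<in> S" "(?g s', ?g t) \<in> S"
    using rel_iso_betw_rel_iff[OF g] below_q t s by blast+
  moreover have "subtree_iso (?g s) (?g s')"
    using subtree_iso_at[OF g] below_q s(3) subtree_iso_sym subtree_iso_trans by meson
  ultimately have "?g s = ?g s'"
    using p rel_iso_betw_mem[OF g t] unfolding rigid_below_def by blast
  then show "s = s'"
    using rel_iso_betw_inj_on[OF g] below_q by (auto dest: inj_onD)
qed

lemma iso_unique:
  assumes p: "rigid_below p"
    and f: "rel_iso_betw S f (below p) (below q)" and g: "rel_iso_betw S g (below p) (below q)"
    and t: "t \<in> below p"
  shows "f t = g t"
proof -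
  from t have "(t, p) \<in> S\<^sup>*" by (simp add: in_below_iff)
  then show ?thesis
  proof (induction rule: converse_rtrancl_induct)
    case base
    show ?case using iso_root[OF f] iso_root[OF g] by simp
  next
    case (step t t')
    have t': "t' \<in> below p" and "t \<in> below p"
      using step.hyps child_in_below by (auto simp: in_below_iff)
    obtain s where s: "s \<in> below p" "f s = g t"
      using rel_iso_betw_mem[OF g \<open>t \<in> below p\<close>] rel_iso_betw_image[OF f] by force
    have "(f s, f t') \<in> S"
      using s(2) step.IH rel_iso_betw_rel_iff[OF g \<open>t \<in> below p\<close> t'] step.hyps(1) by simp
    then have "(s, t') \<in> S"
      using rel_iso_betw_rel_iff[OF f s(1) t'] by simp
    moreover have "subtree_iso t s"
      using subtree_iso_at[OF f s(1)] subtree_iso_at[OF g \<open>t \<in> below p\<close>] s(2)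
        subtree_iso_sym subtree_iso_trans by metis
    ultimately have "t = s"
      using p t' step.hyps(1) unfolding rigid_below_def by blast
    then show ?case using s(2) by simp
  qed
qed

definition branch :: "'a \<Rightarrow> 'a \<Rightarrow> 'a" where
  "branch p t = (THE c. (c, p) \<in> S \<and> t \<in> below c)"

lemma branch_eq:
  assumes "(c, p) \<in> S" "t \<in> below c"
  shows "branch p t = c"
  unfolding branch_def using assms below_siblings_disjoint by (intro the_equality) blast+

lemma below_branch_cases:
  assumes "t \<in> below p"
  obtains "t = p" | c where "(c, p) \<in> S" "t \<in> below c" "branch p t = c"
  using assms below_cases branch_eq by metis

definition glue :: "'a \<Rightarrow> 'a \<Rightarrow> ('a \<Rightarrow> 'a \<Rightarrow> 'a) \<Rightarrow> 'a \<Rightarrow> 'a" where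
  "glue p q h t = (if t = p then q else h (branch p t) t)"

lemma glue_root [simp]: "glue p q h p = q"
  by (simp add: glue_def)

lemma glue_branch: "(c, p) \<in> S \<Longrightarrow> t \<in> below c \<Longrightarrow> glue p q h t = h c t"
  using parent_notin_below branch_eq unfolding glue_def by metis

context
  fixes p q :: 'a and \<sigma> :: "'a \<Rightarrow> 'a" and h :: "'a \<Rightarrow> 'a \<Rightarrow> 'a"
  assumes \<sigma>: "bij_betw \<sigma> {c. (c, p) \<in> S} {d. (d, q) \<in> S}"
    and h: "\<And>c. (c, p) \<in> S \<Longrightarrow> rel_iso_betw S (h c) (below c) (below (\<sigma> c))"
begin

lemma parent_\<sigma>: "(c, p) \<in> S \<Longrightarrow> (\<sigma> c, q) \<in> S"
  using bij_betwE[OF \<sigma>] by blast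

lemma glue_in_branch: "(c, p) \<in> S \<Longrightarrow> t \<in> below c \<Longrightarrow> glue p q h t \<in> below (\<sigma> c)"
  using glue_branch rel_iso_betw_mem[OF h] by metis

lemma glue_image: "glue p q h ` below p = below q"
proof
  show "glue p q h ` below p \<subseteq> below q"
  proof
    fix z assume "z \<in> glue p q h ` below p"
    then obtain t where t: "t \<in> below p" "z = glue p q h t" by blast
    then show "z \<in> below q"
    proof (cases rule: below_branch_cases)
      case (2 c)
      then show ?thesis
        using t(2) glue_in_branch below_mono child_in_below[OF parent_\<sigma> below_self] by blast
    qed simp
  qed
next
  show "below q \<subseteq> glue p q h ` below p"
  proof
    fix z assume z: "z \<in> below q"
    then show "z \<in> glue p q h ` below p"
    proof (cases rule: below_branch_cases)
      case 1
      then show ?thesis using glue_root by (metis below_self image_eqI)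
    next
      case (2 d)
      then obtain c where c: "(c, p) \<in> S" "d = \<sigma> c"
        using bij_betw_imp_surj_on[OF \<sigma>] by blast
      then obtain t where t: "t \<in> below c" "z = h c t"
        using 2 rel_iso_betw_image[OF h] by blast
      have "t \<in> below p"
        using t(1) below_mono child_in_below[OF c(1) below_self] by blast
      then show ?thesis
        using t glue_branch[OF c(1) t(1)] by (metis image_eqI)
    qed
  qed
qed

lemma glue_neq_root: "(c, p) \<in> S \<Longrightarrow> t \<in> below c \<Longrightarrow> glue p q h t \<noteq> q"
  using glue_in_branch parent_notin_below[OF parent_\<sigma>] by metis

lemma glue_branch_eq:
  assumes "(c, p) \<in> S" "(c', p) \<in> S" "t \<in> below c" "t' \<in> below c'"
    and "glue p q h t \<in> below (\<sigma> c')"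
  shows "c = c'"
  using below_siblings_disjoint[OF parent_\<sigma> parent_\<sigma>] glue_in_branch assms
    bij_betw_imp_inj_on[OF \<sigma>] by (metis inj_onD mem_Collect_eq)

lemma glue_inj_on: "inj_on (glue p q h) (below p)"
proof (rule inj_onI)
  fix x y assume x: "x \<in> below p" and y: "y \<in> below p" and eq: "glue p q h x = glue p q h y"
  show "x = y"
    using x
  proof (cases rule: below_branch_cases)
    case 1
    from y show ?thesis
    proof (cases rule: below_branch_cases)
      case (2 c')
      then show ?thesis using 1 eq glue_neq_root by (metis glue_root)
    qed (use 1 in simp)
  next
    case (2 c)
    show ?thesis
      using y
    proof (cases rule: below_branch_cases)
      case 1
      then show ?thesis using 2 eq glue_neq_root by simp
    next
      case (2 c')
      then have "c = c'"
        using \<open>(c, p) \<in> S\<close> \<open>x \<in> below c\<close> eq glue_in_branch glue_branch_eq by metis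
      then show ?thesis
        using 2 \<open>x \<in> below c\<close> eq glue_branch rel_iso_betw_inj_on[OF h] by (metis inj_onD)
    qed
  qed
qed


lemma glue_to_root_iff:
  assumes c: "(c, p) \<in> S" "x \<in> below c"
  shows "(glue p q h x, q) \<in> S \<longleftrightarrow> (x, p) \<in> S"
proof -
  have hc: "rel_iso_betw S (h c) (below c) (below (\<sigma> c))"
    using h[OF c(1)] .
  have "(x, p) \<in> S \<longleftrightarrow> x = c"
    using siblings_below_eq c by blast
  also have "\<dots> \<longleftrightarrow> h c x = \<sigma> c"
    using iso_root[OF hc] rel_iso_betw_inj_on[OF hc] below_self c(2) by (metis inj_onD)
  also have "\<dots> \<longleftrightarrow> (h c x, q) \<in> S"
    using siblings_below_eq[OF _ parent_\<sigma>[OF c(1)]] rel_iso_betw_mem[OF hc c(2)] parent_\<sigma>[OF c(1)]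
    by metis
  finally show ?thesis
    using glue_branch[OF c] by simp
qed

lemma glue_rel_iff:
  assumes x: "x \<in> below p" and y: "y \<in> below p"
  shows "(glue p q h x, glue p q h y) \<in> S \<longleftrightarrow> (x, y) \<in> S"
  using x
proof (cases rule: below_branch_cases)
  case 1
  have "glue p q h y \<in> below q"
    using y glue_image by blast
  then show ?thesis
    using 1 y parent_notin_below by auto
next
  case (2 c)
  note c = 2
  from y show ?thesis
  proof (cases rule: below_branch_cases)
    case 1
    then show ?thesis
      using glue_to_root_iff c by simp
  next
    case (2 c')
    show ?thesis
    proof (cases "c = c'")
      case True
      then show ?thesis
        using 2 c glue_branch rel_iso_betw_rel_iff[OF h] by metis
    next
      case False
      have "(x, y) \<notin> S"
        using False c 2 child_in_below below_siblings_disjoint by metis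
      moreover have "(glue p q h x, glue p q h y) \<notin> S"
        using False c 2 child_in_below glue_in_branch glue_branch_eq by metis
      ultimately show ?thesis by simp
    qed
  qed
qed

lemma rel_iso_betw_glue: "rel_iso_betw S (glue p q h) (below p) (below q)"
  unfolding rel_iso_betw_def bij_betw_def using glue_inj_on glue_image glue_rel_iff by blast

end

lemma subtree_iso_if_children_match:
  assumes siblings: "\<And>t s s'. (s, t) \<in> S \<Longrightarrow> (s', t) \<in> S \<Longrightarrow> subtree_iso s s' \<Longrightarrow> s = s'"
    and fw: "\<And>c. (c, p) \<in> S \<Longrightarrow> \<exists>d. (d, q) \<in> S \<and> subtree_iso c d"
    and bw: "\<And>d. (d, q) \<in> S \<Longrightarrow> \<exists>c. (c, p) \<in> S \<and> subtree_iso c d"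
  shows "subtree_iso p q"
proof -
  define \<sigma> where "\<sigma> c = (SOME d. (d, q) \<in> S \<and> subtree_iso c d)" for c
  have \<sigma>: "(\<sigma> c, q) \<in> S" "subtree_iso c (\<sigma> c)" if "(c, p) \<in> S" for c
    unfolding \<sigma>_def using someI_ex[OF fw[OF that]] by blast+
  have "inj_on \<sigma> {c. (c, p) \<in> S}"
    using \<sigma> siblings subtree_iso_sym subtree_iso_trans by (intro inj_onI) (metis mem_Collect_eq)
  moreover have "\<sigma> ` {c. (c, p) \<in> S} = {d. (d, q) \<in> S}"
  proof (intro subset_antisym subsetI)
    fix d assume "d \<in> {d. (d, q) \<in> S}"
    then obtain c where c: "(c, p) \<in> S" "subtree_iso c d"
      using bw by blast
    then have "\<sigma> c = d"
      using \<sigma> \<open>d \<in> {d. (d, q) \<in> S}\<close> siblings subtree_iso_sym subtree_iso_trans by (metis mem_Collect_eq)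
    then show "d \<in> \<sigma> ` {c. (c, p) \<in> S}"
      using c(1) by blast
  qed (use \<sigma> in blast)
  ultimately have bij: "bij_betw \<sigma> {c. (c, p) \<in> S} {d. (d, q) \<in> S}"
    unfolding bij_betw_def by blast
  define h where "h c = (SOME f. rel_iso_betw S f (below c) (below (\<sigma> c)))" for c
  have "rel_iso_betw S (h c) (below c) (below (\<sigma> c))" if "(c, p) \<in> S" for c
    unfolding h_def using someI_ex \<sigma>(2)[OF that] unfolding subtree_iso_def by metis
  then show ?thesis
    unfolding subtree_iso_def using rel_iso_betw_glue[OF bij] by blast
qed

lemma wf_subtree_iso_S: "wf ({(x, y). subtree_iso x y} O S O {(x, y). subtree_iso x y})"
  (is "wf ?T")
proof (rule wfUNIVI)
  fix P :: "'a \<Rightarrow> bool"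
  assume step: "\<forall>x. (\<forall>y. (y, x) \<in> ?T \<longrightarrow> P y) \<longrightarrow> P x"
  have "\<forall>z. subtree_iso z y \<longrightarrow> P z" for y
  proof (induction y rule: wf_induct[OF wf_S])
    case (1 y)
    show ?case
    proof (intro allI impI)
      fix z assume "subtree_iso z y"
      have "P x" if x: "(x, z) \<in> ?T" for x
      proof -
        obtain b c where "subtree_iso x b" "(b, c) \<in> S" "subtree_iso c z"
          using x by blast
        moreover obtain d where "(d, y) \<in> S" "subtree_iso b d"
          using subtree_iso_child \<open>(b, c) \<in> S\<close> \<open>subtree_iso c z\<close> \<open>subtree_iso z y\<close>
            subtree_iso_trans by metis
        ultimately show "P x"
          using 1 subtree_iso_trans by blast
      qed
      then show "P z" using step by blast
    qed
  qed
  then show "P x" for x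
    using subtree_iso_refl by blast
qed

end

section \<open>Sets, classes and definability in a model of MK*\<close>

locale mk_model =
  fixes E :: "'a \<Rightarrow> 'a \<Rightarrow> bool" and M :: "'a set" and C :: "'a set set"
  assumes MK: "MK_star E M C"
begin

lemma class_subset: "X \<in> C \<Longrightarrow> X \<subseteq> M"
proof -
  have "\<forall>X\<in>C. X \<subseteq> M"
    using MK unfolding MK_star_def by (elim conjE) assumption
  then show "X \<in> C \<Longrightarrow> X \<subseteq> M" by blast
qed

lemma set_extensionality: "x \<in> M \<Longrightarrow> y \<in> M \<Longrightarrow> (\<And>z. z \<in> M \<Longrightarrow> E z x \<longleftrightarrow> E z y) \<Longrightarrow> x = y"
proof -
  have "\<forall>x\<in>M. \<forall>y\<in>M. (\<forall>z\<in>M. E z x \<longleftrightarrow> E z y) \<longrightarrow> x = y"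
    using MK unfolding MK_star_def by (elim conjE) assumption
  then show "x \<in> M \<Longrightarrow> y \<in> M \<Longrightarrow> (\<And>z. z \<in> M \<Longrightarrow> E z x \<longleftrightarrow> E z y) \<Longrightarrow> x = y" by blast
qed

lemma pairing: "x \<in> M \<Longrightarrow> y \<in> M \<Longrightarrow> \<exists>p\<in>M. \<forall>z\<in>M. E z p \<longleftrightarrow> z = x \<or> z = y"
proof -
  have "\<forall>x\<in>M. \<forall>y\<in>M. \<exists>p\<in>M. \<forall>z\<in>M. E z p \<longleftrightarrow> (z = x \<or> z = y)"
    using MK unfolding MK_star_def by (elim conjE) assumption
  then show "x \<in> M \<Longrightarrow> y \<in> M \<Longrightarrow> \<exists>p\<in>M. \<forall>z\<in>M. E z p \<longleftrightarrow> z = x \<or> z = y" by blast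
qed

lemma comprehension:
  "assignment M C s c \<Longrightarrow> \<exists>X\<in>C. \<forall>u\<in>M. u \<in> X \<longleftrightarrow> sat E M C (s(x := u)) c \<phi>"
proof -
  have "\<forall>\<phi> x s c. assignment M C s c \<longrightarrow> (\<exists>X\<in>C. \<forall>u\<in>M. u \<in> X \<longleftrightarrow> sat E M C (s(x := u)) c \<phi>)"
    using MK unfolding MK_star_def by (elim conjE) assumption
  then show "assignment M C s c \<Longrightarrow> \<exists>X\<in>C. \<forall>u\<in>M. u \<in> X \<longleftrightarrow> sat E M C (s(x := u)) c \<phi>"
    by blast
qed

lemma assignment_exists: "\<exists>s c. assignment M C s c"
proof -
  have "\<exists>e\<in>M. \<forall>z\<in>M. \<not> E z e"
    using MK unfolding MK_star_def by (elim conjE) assumption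
  moreover have "\<exists>W. global_wo E M C W"
    using MK unfolding MK_star_def by (elim conjE) assumption
  ultimately obtain e W where "e \<in> M" "W \<in> C"
    unfolding global_wo_def by blast
  then show ?thesis
    unfolding assignment_def by (intro exI[of _ "\<lambda>_. e"] exI[of _ "\<lambda>_. W"]) auto
qed

lemma upair:
  assumes "x \<in> M" "y \<in> M"
  shows "upair E M x y \<in> M" "w \<in> M \<Longrightarrow> E w (upair E M x y) \<longleftrightarrow> w = x \<or> w = y"
proof -
  obtain p where p: "p \<in> M" "\<forall>z\<in>M. E z p \<longleftrightarrow> z = x \<or> z = y"
    using pairing[OF assms] by blast
  have "\<exists>!u. u \<in> M \<and> (\<forall>w\<in>M. E w u \<longleftrightarrow> w = x \<or> w = y)"
    using p set_extensionality by (intro ex1I[of _ p]) blast+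
  then have "upair E M x y \<in> M \<and> (\<forall>w\<in>M. E w (upair E M x y) \<longleftrightarrow> w = x \<or> w = y)"
    unfolding upair_def by (rule theI')
  then show "upair E M x y \<in> M" "w \<in> M \<Longrightarrow> E w (upair E M x y) \<longleftrightarrow> w = x \<or> w = y"
    by blast+
qed

lemma upair_eq_iff:
  assumes "x \<in> M" "y \<in> M" "x' \<in> M" "y' \<in> M"
  shows "upair E M x y = upair E M x' y' \<longleftrightarrow> {x, y} = {x', y'}"
proof
  assume "upair E M x y = upair E M x' y'"
  then have "\<forall>w\<in>M. (w = x \<or> w = y) \<longleftrightarrow> (w = x' \<or> w = y')"
    using upair(2)[OF assms(1,2)] upair(2)[OF assms(3,4)] by metis
  then show "{x, y} = {x', y'}"
    using assms by blast
next
  assume "{x, y} = {x', y'}"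
  then show "upair E M x y = upair E M x' y'"
    using upair[OF assms(1,2)] upair[OF assms(3,4)]
    by (intro set_extensionality) (auto simp: doubleton_eq_iff)
qed

lemma kpair_in_M: "x \<in> M \<Longrightarrow> y \<in> M \<Longrightarrow> kpair E M x y \<in> M"
  unfolding kpair_def by (simp add: upair(1))

lemma kpair_inject:
  assumes "x \<in> M" "y \<in> M" "x' \<in> M" "y' \<in> M" "kpair E M x y = kpair E M x' y'"
  shows "x = x' \<and> y = y'"
proof -
  have "{upair E M x x, upair E M x y} = {upair E M x' x', upair E M x' y'}"
    using assms(5) unfolding kpair_def by (subst (asm) upair_eq_iff) (simp_all add: upair(1) assms(1-4))
  then have "{x, x} = {x', x'} \<and> {x, y} = {x', y'} \<or> {x, x} = {x', y'} \<and> {x, y} = {x', x'}"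
    using upair_eq_iff assms(1-4) by (auto simp: doubleton_eq_iff)
  then show ?thesis
    by (auto simp: doubleton_eq_iff)
qed

lemma crel_iff: "(x, y) \<in> crel E M X \<longleftrightarrow> x \<in> M \<and> y \<in> M \<and> kpair E M x y \<in> X"
  unfolding crel_def by simp

definition definable :: "((nat \<Rightarrow> 'a) \<Rightarrow> (nat \<Rightarrow> 'a set) \<Rightarrow> bool) \<Rightarrow> bool" where
  "definable P \<longleftrightarrow> (\<exists>\<phi>. \<forall>s c. assignment M C s c \<longrightarrow> (sat E M C s c \<phi> \<longleftrightarrow> P s c))"

lemma definable_cong:
  "definable P \<Longrightarrow> (\<And>s c. assignment M C s c \<Longrightarrow> P s c = Q s c) \<Longrightarrow> definable Q"
  unfolding definable_def by metis

lemma definable_mem: "definable (\<lambda>s c. E (s i) (s j))"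
  unfolding definable_def by (rule exI[of _ "SMem i j"]) simp

lemma definable_eq: "definable (\<lambda>s c. s i = s j)"
  unfolding definable_def by (rule exI[of _ "SEq i j"]) simp

lemma definable_class_mem: "definable (\<lambda>s c. s i \<in> c J)"
  unfolding definable_def by (rule exI[of _ "CMem i J"]) simp

lemma definable_not: "definable P \<Longrightarrow> definable (\<lambda>s c. \<not> P s c)"
  unfolding definable_def by (metis sat.simps(4))

lemma definable_conj: "definable P \<Longrightarrow> definable Q \<Longrightarrow> definable (\<lambda>s c. P s c \<and> Q s c)"
  unfolding definable_def by (metis sat.simps(5))

lemma definable_disj: "definable P \<Longrightarrow> definable Q \<Longrightarrow> definable (\<lambda>s c. P s c \<or> Q s c)"
proof -
  assume "definable P" "definable Q"
  then have "definable (\<lambda>s c. \<not> (\<not> P s c \<and> \<not> Q s c))"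
    by (intro definable_not definable_conj)
  then show ?thesis
    by (rule definable_cong) simp
qed

lemma definable_imp: "definable P \<Longrightarrow> definable Q \<Longrightarrow> definable (\<lambda>s c. P s c \<longrightarrow> Q s c)"
proof -
  assume "definable P" "definable Q"
  then have "definable (\<lambda>s c. \<not> P s c \<or> Q s c)"
    by (intro definable_not definable_disj)
  then show ?thesis
    by (rule definable_cong) simp
qed

lemma definable_iff: "definable P \<Longrightarrow> definable Q \<Longrightarrow> definable (\<lambda>s c. P s c \<longleftrightarrow> Q s c)"
proof -
  assume "definable P" "definable Q"
  then have "definable (\<lambda>s c. (P s c \<longrightarrow> Q s c) \<and> (Q s c \<longrightarrow> P s c))"
    by (intro definable_imp definable_conj)
  then show ?thesis
    by (rule definable_cong) blast
qed

lemma assignment_upd_set: "assignment M C s c \<Longrightarrow> u \<in> M \<Longrightarrow> assignment M C (s(i := u)) c"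
  unfolding assignment_def by auto

lemma assignment_upd_class: "assignment M C s c \<Longrightarrow> A \<in> C \<Longrightarrow> assignment M C s (c(J := A))"
  unfolding assignment_def by auto

lemma definable_ex_set:
  assumes "definable (\<lambda>s c. P s c (s i))" "\<And>s c u x. P (s(i := x)) c u = P s c u"
  shows "definable (\<lambda>s c. \<exists>u\<in>M. P s c u)"
proof -
  obtain \<phi> where \<phi>: "\<And>s c. assignment M C s c \<Longrightarrow> sat E M C s c \<phi> \<longleftrightarrow> P s c (s i)"
    using assms(1) unfolding definable_def by blast
  have "sat E M C s c (ExS i \<phi>) \<longleftrightarrow> (\<exists>u\<in>M. P s c u)" if "assignment M C s c" for s c
  proof -
    have "sat E M C s c (ExS i \<phi>) \<longleftrightarrow> (\<exists>u\<in>M. P (s(i := u)) c u)"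
      using \<phi> assignment_upd_set[OF that] by (metis fun_upd_same sat.simps(6))
    then show ?thesis
      using assms(2) by simp
  qed
  then show ?thesis
    unfolding definable_def by blast
qed

lemma definable_all_set:
  assumes "definable (\<lambda>s c. P s c (s i))" "\<And>s c u x. P (s(i := x)) c u = P s c u"
  shows "definable (\<lambda>s c. \<forall>u\<in>M. P s c u)"
proof -
  have "definable (\<lambda>s c. \<not> (\<exists>u\<in>M. \<not> P s c u))"
    by (rule definable_not, rule definable_ex_set[where i=i], rule definable_not, rule assms(1))
      (simp add: assms(2))
  then show ?thesis
    by (rule definable_cong) blast
qed

lemma definable_ex_class:
  assumes "definable (\<lambda>s c. P s c (c J))" "\<And>s c A B. P s (c(J := B)) A = P s c A"
  shows "definable (\<lambda>s c. \<exists>A\<in>C. P s c A)"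
proof -
  obtain \<phi> where \<phi>: "\<And>s c. assignment M C s c \<Longrightarrow> sat E M C s c \<phi> \<longleftrightarrow> P s c (c J)"
    using assms(1) unfolding definable_def by blast
  have "sat E M C s c (ExC J \<phi>) \<longleftrightarrow> (\<exists>A\<in>C. P s c A)" if "assignment M C s c" for s c
  proof -
    have "sat E M C s c (ExC J \<phi>) \<longleftrightarrow> (\<exists>A\<in>C. P s (c(J := A)) A)"
      using \<phi> assignment_upd_class[OF that] by (metis fun_upd_same sat.simps(7))
    then show ?thesis
      using assms(2) by simp
  qed
  then show ?thesis
    unfolding definable_def by blast
qed

lemma definable_all_class:
  assumes "definable (\<lambda>s c. P s c (c J))" "\<And>s c A B. P s (c(J := B)) A = P s c A"
  shows "definable (\<lambda>s c. \<forall>A\<in>C. P s c A)"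
proof -
  have "definable (\<lambda>s c. \<not> (\<exists>A\<in>C. \<not> P s c A))"
    by (rule definable_not, rule definable_ex_class[where J=J], rule definable_not, rule assms(1))
      (simp add: assms(2))
  then show ?thesis
    by (rule definable_cong) blast
qed

lemma definable_upair_eq: "definable (\<lambda>s c. s k = upair E M (s i) (s j))"
proof -
  have upair_char: "w = upair E M x y \<longleftrightarrow> (\<forall>z\<in>M. E z w \<longleftrightarrow> z = x \<or> z = y)"
    if "x \<in> M" "y \<in> M" "w \<in> M" for x y w
    using upair[OF that(1,2)] set_extensionality that by metis
  have "definable (\<lambda>s c. \<forall>z\<in>M. E z (s k) \<longleftrightarrow> z = s i \<or> z = s j)"
    by (rule definable_all_set[where i="i + j + k + 1"])
      (intro definable_iff definable_disj definable_mem definable_eq, simp)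
  then show ?thesis
    by (rule definable_cong) (simp add: assignment_def upair_char[symmetric] range_subsetD)
qed

lemma definable_kpair_eq: "definable (\<lambda>s c. s k = kpair E M (s i) (s j))"
proof -
  have "definable (\<lambda>s c. \<exists>p\<in>M. \<exists>q\<in>M.
          p = upair E M (s i) (s i) \<and> q = upair E M (s i) (s j) \<and> s k = upair E M p q)"
    apply (rule definable_ex_set[where i="i + j + k + 1"])
     apply (rule definable_ex_set[where i="i + j + k + 2"])
      apply (intro definable_conj definable_upair_eq)
    by simp_all
  then show ?thesis
    by (rule definable_cong) (auto simp: assignment_def kpair_def upair(1) range_subsetD)
qed

lemma definable_kpair_mem: "definable (\<lambda>s c. kpair E M (s i) (s j) \<in> c J)"
proof -
  have "definable (\<lambda>s c. \<exists>w\<in>M. w = kpair E M (s i) (s j) \<and> w \<in> c J)"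
    apply (rule definable_ex_set[where i="i + j + 1"])
     apply (intro definable_conj definable_kpair_eq definable_class_mem)
    by simp_all
  then show ?thesis
    by (rule definable_cong) (auto simp: assignment_def kpair_in_M range_subsetD)
qed

lemma class_of_definable:
  assumes "assignment M C s c" "definable P"
  shows "{u \<in> M. P (s(i := u)) c} \<in> C"
proof -
  obtain \<phi> where \<phi>: "\<And>s c. assignment M C s c \<Longrightarrow> sat E M C s c \<phi> \<longleftrightarrow> P s c"
    using assms(2) unfolding definable_def by blast
  obtain X where X: "X \<in> C" "\<forall>u\<in>M. u \<in> X \<longleftrightarrow> sat E M C (s(i := u)) c \<phi>"
    using comprehension[OF assms(1)] by blast
  have "X = {u \<in> M. P (s(i := u)) c}"
    using X class_subset[OF X(1)] \<phi> assignment_upd_set[OF assms(1)] by blast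
  then show ?thesis
    using X(1) by simp
qed

lemma finite_class: "finite X \<Longrightarrow> X \<subseteq> M \<Longrightarrow> X \<in> C"
proof (induction X rule: finite_induct)
  case empty
  obtain s c where "assignment M C s c"
    using assignment_exists by blast
  moreover have "definable (\<lambda>s c. s 0 \<noteq> s 0)"
    by (intro definable_not definable_eq)
  ultimately have "{u \<in> M. u \<noteq> u} \<in> C"
    using class_of_definable[where i=0] by fastforce
  then show ?case by simp
next
  case (insert t X)
  then have "assignment M C (\<lambda>_. t) (\<lambda>_. X)"
    unfolding assignment_def by auto
  moreover have "definable (\<lambda>s c. s 0 \<in> c 0 \<or> s 0 = s 1)"
    by (intro definable_disj definable_class_mem definable_eq)
  ultimately have "{u \<in> M. u \<in> X \<or> u = t} \<in> C"
    using class_of_definable[where i=0] by fastforce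
  moreover have "{u \<in> M. u \<in> X \<or> u = t} = insert t X"
    using insert.prems by auto
  ultimately show ?case by simp
qed

definition kgraph :: "('a \<Rightarrow> 'a) \<Rightarrow> 'a set \<Rightarrow> 'a set" where
  "kgraph f A = (\<lambda>u. kpair E M u (f u)) ` A"

text \<open>The model cannot speak about reflexive-transitive closures directly; instead
  u lies below y iff y belongs to every class that contains u and is closed under
  X1-successors.  This agrees with the true closure once that closure is itself a class.\<close>

definition model_below :: "'a set \<Rightarrow> 'a set \<Rightarrow> 'a \<Rightarrow> 'a \<Rightarrow> bool" where
  "model_below X0 X1 u y \<longleftrightarrow> u \<in> X0 \<and>
     (\<forall>A\<in>C. u \<in> A \<and> (\<forall>w\<in>M. \<forall>w'\<in>M. w \<in> A \<longrightarrow> kpair E M w w' \<in> X1 \<longrightarrow> w' \<in> A) \<longrightarrow> y \<in> A)"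

text \<open>The body of iso_in with restr replaced by model_below and every quantifier bounded
  by M, so that it is expressed by a formula.\<close>

definition model_iso :: "'a set \<Rightarrow> 'a set \<Rightarrow> 'a set \<Rightarrow> 'a \<Rightarrow> 'a \<Rightarrow> bool" where
  "model_iso X0 X1 G y z \<longleftrightarrow>
     (\<forall>p\<in>M. p \<in> G \<longrightarrow>
        (\<exists>u\<in>M. model_below X0 X1 u y \<and> (\<exists>v\<in>M. model_below X0 X1 v z \<and> p = kpair E M u v))) \<and>
     (\<forall>u\<in>M. model_below X0 X1 u y \<longrightarrow>
        (\<exists>v\<in>M. (model_below X0 X1 v z \<and> kpair E M u v \<in> G) \<and>
           (\<forall>v'\<in>M. (model_below X0 X1 v' z \<and> kpair E M u v' \<in> G) \<longrightarrow> v' = v))) \<and>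
     (\<forall>v\<in>M. model_below X0 X1 v z \<longrightarrow>
        (\<exists>u\<in>M. (model_below X0 X1 u y \<and> kpair E M u v \<in> G) \<and>
           (\<forall>u'\<in>M. (model_below X0 X1 u' y \<and> kpair E M u' v \<in> G) \<longrightarrow> u' = u))) \<and>
     (\<forall>u\<in>M. \<forall>u'\<in>M. \<forall>v\<in>M. \<forall>v'\<in>M.
        model_below X0 X1 u y \<longrightarrow> model_below X0 X1 u' y \<longrightarrow>
        model_below X0 X1 v z \<longrightarrow> model_below X0 X1 v' z \<longrightarrow>
        kpair E M u v \<in> G \<longrightarrow> kpair E M u' v' \<in> G \<longrightarrow>
        (kpair E M u u' \<in> X1 \<longleftrightarrow> kpair E M v v' \<in> X1))"

lemma definable_model_below: "definable (\<lambda>s c. model_below (c K0) (c K1) (s i) (s j))"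
  unfolding model_below_def
  apply (intro definable_conj definable_class_mem)
  apply (rule definable_all_class[where J="K0 + K1 + 1"])
   apply (intro definable_imp definable_conj definable_class_mem)
    apply (rule definable_all_set[where i="i + j + 1"])
     apply (rule definable_all_set[where i="i + j + 2"])
      apply (intro definable_imp definable_conj definable_class_mem definable_kpair_mem)
  by simp_all

lemma definable_model_iso: "definable (\<lambda>s c. model_iso (c K0) (c K1) (c K2) (s i) (s j))"
  unfolding model_iso_def
  apply (intro definable_conj)
  subgoal
    apply (rule definable_all_set[where i="i + j + 1"])
     apply (intro definable_imp definable_class_mem)
     apply (rule definable_ex_set[where i="i + j + 2"])
      apply (intro definable_conj definable_model_below)
      apply (rule definable_ex_set[where i="i + j + 3"])
       apply (intro definable_conj definable_model_below definable_kpair_eq)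
    by simp_all
  subgoal
    apply (rule definable_all_set[where i="i + j + 1"])
     apply (intro definable_imp definable_model_below)
     apply (rule definable_ex_set[where i="i + j + 2"])
      apply (intro definable_conj definable_model_below definable_kpair_mem)
      apply (rule definable_all_set[where i="i + j + 3"])
       apply (intro definable_imp definable_conj definable_model_below definable_kpair_mem definable_eq)
    by simp_all
  subgoal
    apply (rule definable_all_set[where i="i + j + 1"])
     apply (intro definable_imp definable_model_below)
     apply (rule definable_ex_set[where i="i + j + 2"])
      apply (intro definable_conj definable_model_below definable_kpair_mem)
      apply (rule definable_all_set[where i="i + j + 3"])
       apply (intro definable_imp definable_conj definable_model_below definable_kpair_mem definable_eq)
    by simp_all
  apply (rule definable_all_set[where i="i + j + 1"])
   apply (rule definable_all_set[where i="i + j + 2"])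
    apply (rule definable_all_set[where i="i + j + 3"])
     apply (rule definable_all_set[where i="i + j + 4"])
      apply (intro definable_imp definable_iff definable_model_below definable_kpair_mem)
  by simp_all

end

section \<open>Coding pairs\<close>

locale coding_context = mk_model +
  fixes M0 R W :: "'a set" and a :: 'a
  assumes beta: "beta_model E M C"
    and coding: "coding_pair E M C M0 R a"
    and choice: "global_wo E M C W"
begin

abbreviation S :: "('a \<times> 'a) set" where
  "S \<equiv> crel E M R"

lemma M0_class: "M0 \<in> C"
  using coding unfolding coding_pair_def by (elim conjE) assumption

lemma R_class: "R \<in> C"
  using coding unfolding coding_pair_def by (elim conjE) assumption

lemma a_in_M0: "a \<in> M0"
  using coding unfolding coding_pair_def by (elim conjE) assumption

lemma R_pairs: "\<forall>p\<in>R. \<exists>x\<in>M0. \<exists>y\<in>M0. p = kpair E M x y"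
  using coding unfolding coding_pair_def by (elim conjE) assumption

lemma distance_unique: "\<forall>z\<in>M0. \<exists>!n. rdist E M M0 R a z n"
  using coding unfolding coding_pair_def by (elim conjE) assumption

lemma siblings_not_iso_in:
  "\<forall>x\<in>M0. \<forall>y\<in>M0. \<forall>z\<in>M0. y \<noteq> z \<longrightarrow> (y, x) \<in> S \<longrightarrow> (z, x) \<in> S \<longrightarrow>
     \<not> iso_in E M C M0 R y z"
  using coding unfolding coding_pair_def by (elim conjE) assumption

lemma level_parents_distinct:
  "\<forall>y\<in>M0. \<forall>z\<in>M0. \<forall>v\<in>M0. \<forall>n. y \<noteq> z \<longrightarrow> rdist E M M0 R a y n \<longrightarrow> rdist E M M0 R a z n \<longrightarrow>
     (v, y) \<in> S \<longrightarrow> (v, z) \<notin> S"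
  using coding unfolding coding_pair_def by (elim conjE) assumption

lemma M0_subset: "M0 \<subseteq> M"
  using class_subset M0_class by blast

lemma S_M0: "(x, y) \<in> S \<Longrightarrow> x \<in> M0 \<and> y \<in> M0"
proof -
  assume "(x, y) \<in> S"
  then have xy: "x \<in> M" "y \<in> M" "kpair E M x y \<in> R"
    by (simp_all add: crel_iff)
  then obtain x' y' where "x' \<in> M0" "y' \<in> M0" "kpair E M x y = kpair E M x' y'"
    using R_pairs by blast
  then show ?thesis
    using kpair_inject[of x y x' y'] xy M0_subset by auto
qed

lemma S_restrict_M0: "S \<inter> M0 \<times> M0 = S"
  using S_M0 by auto

lemma rdist_iff: "rdist E M M0 R a z n \<longleftrightarrow> (z, a) \<in> S ^^ n"
  unfolding rdist_def S_restrict_M0 ..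

lemma wf_crel_R: "wf S"
  using beta R_class coding unfolding beta_model_def coding_pair_def by blast

text \<open>Elements at equal distance from a have no common child (condition (c)), and the
  distances of a child and its parent differ by one; hence a child has only one parent.\<close>

lemma single_valued_crel_R: "single_valued S"
proof (rule single_valuedI)
  fix t y z assume ty: "(t, y) \<in> S" and tz: "(t, z) \<in> S"
  have M0: "t \<in> M0" "y \<in> M0" "z \<in> M0"
    using S_M0 ty tz by blast+
  obtain m m' where m: "(y, a) \<in> S ^^ m" and m': "(z, a) \<in> S ^^ m'"
    using distance_unique M0 unfolding rdist_iff by blast
  have "(t, a) \<in> S ^^ Suc m" "(t, a) \<in> S ^^ Suc m'"
    using relpow_Suc_I2[OF ty m] relpow_Suc_I2[OF tz m'] .
  then have "m = m'"
    using distance_unique M0(1) unfolding rdist_iff by (metis nat.inject)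
  then show "y = z"
    using level_parents_distinct M0 m m' ty tz unfolding rdist_iff by blast
qed

lemma root_no_parent: "(a, z) \<notin> S"
proof
  assume az: "(a, z) \<in> S"
  then obtain m where "(z, a) \<in> S ^^ m"
    using distance_unique S_M0 unfolding rdist_iff by blast
  then have "(a, a) \<in> S ^^ Suc m"
    using relpow_Suc_I2[OF az] by blast
  moreover have "(a, a) \<in> S ^^ 0" by simp
  ultimately show False
    using distance_unique a_in_M0 unfolding rdist_iff by (metis nat.distinct(1))
qed

end

sublocale coding_context \<subseteq> forest "crel E M R"
  by unfold_locales (fact wf_crel_R single_valued_crel_R)+

context coding_context
begin

lemma below_subset_M0: "y \<in> M0 \<Longrightarrow> below y \<subseteq> M0"
  unfolding below_def using S_M0 by (auto elim: converse_rtranclE)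

lemma restr_eq_below: "y \<in> M0 \<Longrightarrow> restr E M M0 R y = below y"
  unfolding restr_def S_restrict_M0 using below_subset_M0 by (auto simp: in_below_iff)

lemma finite_ancestors_M0: "t \<in> M0 \<Longrightarrow> finite {z. (t, z) \<in> S\<^sup>*}"
  using distance_unique root_no_parent finite_ancestors unfolding rdist_iff by metis


lemma model_below_iff:
  assumes "u \<in> M" "y \<in> M"
  shows "model_below M0 R u y \<longleftrightarrow> u \<in> restr E M M0 R y"
proof
  assume below: "model_below M0 R u y"
  then have u: "u \<in> M0"
    unfolding model_below_def by blast
  let ?A = "{z. (u, z) \<in> S\<^sup>*}"
  have "z \<in> M0" if "(u, z) \<in> S\<^sup>*" for z
    using that u S_M0 by (induction rule: rtrancl_induct) blast+
  then have "?A \<subseteq> M"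
    using M0_subset by blast
  then have "?A \<in> C"
    by (rule finite_class[OF finite_ancestors_M0[OF u]])
  moreover have "\<forall>w\<in>M. \<forall>w'\<in>M. w \<in> ?A \<longrightarrow> kpair E M w w' \<in> R \<longrightarrow> w' \<in> ?A"
    by (simp add: crel_iff rtrancl.rtrancl_into_rtrancl)
  moreover have "u \<in> ?A"
    by simp
  ultimately have "y \<in> ?A"
    using below unfolding model_below_def by (elim conjE) (drule bspec, assumption, blast)
  then show "u \<in> restr E M M0 R y"
    using u unfolding restr_def S_restrict_M0 by simp
next
  assume "u \<in> restr E M M0 R y"
  then have u: "u \<in> M0" and uy: "(u, y) \<in> S\<^sup>*"
    unfolding restr_def S_restrict_M0 by simp_all
  have "y \<in> A" if "u \<in> A" "\<forall>w\<in>M. \<forall>w'\<in>M. w \<in> A \<longrightarrow> kpair E M w w' \<in> R \<longrightarrow> w' \<in> A" for A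
    using uy
  proof (induction rule: rtrancl_induct)
    case base
    show ?case using that(1) .
  next
    case (step x x')
    then have "x \<in> M" "x' \<in> M" "kpair E M x x' \<in> R"
      by (simp_all add: crel_iff)
    then show ?case
      using that(2) step.IH by blast
  qed
  then show "model_below M0 R u y"
    unfolding model_below_def using u by blast
qed

definition iso_code :: "'a set \<Rightarrow> 'a \<Rightarrow> 'a \<Rightarrow> bool" where
  "iso_code G y z \<longleftrightarrow>
     (\<forall>p\<in>G. \<exists>u\<in>restr E M M0 R y. \<exists>v\<in>restr E M M0 R z. p = kpair E M u v) \<and>
     (\<forall>u\<in>restr E M M0 R y. \<exists>!v. v \<in> restr E M M0 R z \<and> kpair E M u v \<in> G) \<and>
     (\<forall>v\<in>restr E M M0 R z. \<exists>!u. u \<in> restr E M M0 R y \<and> kpair E M u v \<in> G) \<and>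
     (\<forall>u\<in>restr E M M0 R y. \<forall>u'\<in>restr E M M0 R y.
      \<forall>v\<in>restr E M M0 R z. \<forall>v'\<in>restr E M M0 R z.
        kpair E M u v \<in> G \<longrightarrow> kpair E M u' v' \<in> G \<longrightarrow>
        (kpair E M u u' \<in> R \<longleftrightarrow> kpair E M v v' \<in> R))"

lemma iso_in_iff_iso_code: "iso_in E M C M0 R y z \<longleftrightarrow> (\<exists>G\<in>C. iso_code G y z)"
  unfolding iso_in_def iso_code_def ..

lemma bounded_ex1_iff:
  assumes "D \<subseteq> M" "D' \<subseteq> M"
  shows "(\<forall>u\<in>M. u \<in> D \<longrightarrow>
            (\<exists>v\<in>M. (v \<in> D' \<and> P u v) \<and> (\<forall>v'\<in>M. (v' \<in> D' \<and> P u v') \<longrightarrow> v' = v)))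
         \<longleftrightarrow> (\<forall>u\<in>D. \<exists>!v. v \<in> D' \<and> P u v)"
proof (intro iffI ballI impI)
  fix u assume "\<forall>u\<in>M. u \<in> D \<longrightarrow>
    (\<exists>v\<in>M. (v \<in> D' \<and> P u v) \<and> (\<forall>v'\<in>M. (v' \<in> D' \<and> P u v') \<longrightarrow> v' = v))" "u \<in> D"
  then obtain v where "v \<in> D'" "P u v" "\<forall>v'\<in>M. v' \<in> D' \<and> P u v' \<longrightarrow> v' = v"
    using assms(1) by blast
  then show "\<exists>!v. v \<in> D' \<and> P u v"
    using assms(2) by blast
next
  fix u assume "\<forall>u\<in>D. \<exists>!v. v \<in> D' \<and> P u v" "u \<in> M" "u \<in> D"
  then obtain v where "v \<in> D'" "P u v" "\<And>v'. v' \<in> D' \<and> P u v' \<Longrightarrow> v' = v"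
    by blast
  then show "\<exists>v\<in>M. (v \<in> D' \<and> P u v) \<and> (\<forall>v'\<in>M. (v' \<in> D' \<and> P u v') \<longrightarrow> v' = v)"
    using assms(2) by blast
qed

lemma model_iso_iff_iso_code:
  assumes "G \<in> C" "y \<in> M" "z \<in> M"
  shows "model_iso M0 R G y z \<longleftrightarrow> iso_code G y z"
proof -
  have GM: "G \<subseteq> M"
    using class_subset[OF assms(1)] .
  have DM: "\<And>t. restr E M M0 R t \<subseteq> M"
    using M0_subset unfolding restr_def by blast
  note below = model_below_iff[OF _ assms(2)] model_below_iff[OF _ assms(3)]
  have "model_iso M0 R G y z \<longleftrightarrow>
     (\<forall>p\<in>M. p \<in> G \<longrightarrow> (\<exists>u\<in>M. u \<in> restr E M M0 R y \<and>
        (\<exists>v\<in>M. v \<in> restr E M M0 R z \<and> p = kpair E M u v))) \<and>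
     (\<forall>u\<in>M. u \<in> restr E M M0 R y \<longrightarrow>
        (\<exists>v\<in>M. (v \<in> restr E M M0 R z \<and> kpair E M u v \<in> G) \<and>
           (\<forall>v'\<in>M. (v' \<in> restr E M M0 R z \<and> kpair E M u v' \<in> G) \<longrightarrow> v' = v))) \<and>
     (\<forall>v\<in>M. v \<in> restr E M M0 R z \<longrightarrow>
        (\<exists>u\<in>M. (u \<in> restr E M M0 R y \<and> kpair E M u v \<in> G) \<and>
           (\<forall>u'\<in>M. (u' \<in> restr E M M0 R y \<and> kpair E M u' v \<in> G) \<longrightarrow> u' = u))) \<and>
     (\<forall>u\<in>M. \<forall>u'\<in>M. \<forall>v\<in>M. \<forall>v'\<in>M.
        u \<in> restr E M M0 R y \<longrightarrow> u' \<in> restr E M M0 R y \<longrightarrow>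
        v \<in> restr E M M0 R z \<longrightarrow> v' \<in> restr E M M0 R z \<longrightarrow>
        kpair E M u v \<in> G \<longrightarrow> kpair E M u' v' \<in> G \<longrightarrow>
        (kpair E M u u' \<in> R \<longleftrightarrow> kpair E M v v' \<in> R))"
    unfolding model_iso_def by (simp add: below)
  also have "\<dots> \<longleftrightarrow> iso_code G y z"
    unfolding iso_code_def bounded_ex1_iff[OF DM DM]
  proof (intro conj_cong refl)
    show "(\<forall>p\<in>M. p \<in> G \<longrightarrow> (\<exists>u\<in>M. u \<in> restr E M M0 R y \<and>
        (\<exists>v\<in>M. v \<in> restr E M M0 R z \<and> p = kpair E M u v))) \<longleftrightarrow>
      (\<forall>p\<in>G. \<exists>u\<in>restr E M M0 R y. \<exists>v\<in>restr E M M0 R z. p = kpair E M u v)"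
      using GM DM by blast
    show "(\<forall>u\<in>M. \<forall>u'\<in>M. \<forall>v\<in>M. \<forall>v'\<in>M.
        u \<in> restr E M M0 R y \<longrightarrow> u' \<in> restr E M M0 R y \<longrightarrow>
        v \<in> restr E M M0 R z \<longrightarrow> v' \<in> restr E M M0 R z \<longrightarrow>
        kpair E M u v \<in> G \<longrightarrow> kpair E M u' v' \<in> G \<longrightarrow>
        (kpair E M u u' \<in> R \<longleftrightarrow> kpair E M v v' \<in> R)) \<longleftrightarrow>
      (\<forall>u\<in>restr E M M0 R y. \<forall>u'\<in>restr E M M0 R y.
       \<forall>v\<in>restr E M M0 R z. \<forall>v'\<in>restr E M M0 R z.
        kpair E M u v \<in> G \<longrightarrow> kpair E M u' v' \<in> G \<longrightarrow>
        (kpair E M u u' \<in> R \<longleftrightarrow> kpair E M v v' \<in> R))"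
      using DM by blast
  qed
  finally show ?thesis .
qed


lemma below_subset_M: "y \<in> M0 \<Longrightarrow> below y \<subseteq> M"
  using below_subset_M0 M0_subset by blast

lemma S_iff_kpair_R: "x \<in> M \<Longrightarrow> x' \<in> M \<Longrightarrow> (x, x') \<in> S \<longleftrightarrow> kpair E M x x' \<in> R"
  by (simp add: crel_iff)

lemma iso_code_below:
  assumes "y \<in> M0" "z \<in> M0"
  shows "iso_code G y z \<longleftrightarrow>
     (\<forall>p\<in>G. \<exists>u\<in>below y. \<exists>v\<in>below z. p = kpair E M u v) \<and>
     (\<forall>u\<in>below y. \<exists>!v. v \<in> below z \<and> kpair E M u v \<in> G) \<and>
     (\<forall>v\<in>below z. \<exists>!u. u \<in> below y \<and> kpair E M u v \<in> G) \<and>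
     (\<forall>u\<in>below y. \<forall>u'\<in>below y. \<forall>v\<in>below z. \<forall>v'\<in>below z.
        kpair E M u v \<in> G \<longrightarrow> kpair E M u' v' \<in> G \<longrightarrow> ((u, u') \<in> S \<longleftrightarrow> (v, v') \<in> S))"
  unfolding iso_code_def restr_eq_below[OF assms(1)] restr_eq_below[OF assms(2)]
  using below_subset_M[OF assms(1)] below_subset_M[OF assms(2)] S_iff_kpair_R
  by (intro conj_cong refl) (simp_all add: subset_iff)

lemma iso_code_imp_graph:
  assumes y: "y \<in> M0" and z: "z \<in> M0" and "iso_code G y z"
  obtains h where "rel_iso_betw S h (below y) (below z)" "G = kgraph h (below y)"
proof -
  have graph: "\<forall>p\<in>G. \<exists>u\<in>below y. \<exists>v\<in>below z. p = kpair E M u v"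
    and total: "\<forall>u\<in>below y. \<exists>!v. v \<in> below z \<and> kpair E M u v \<in> G"
    and onto: "\<forall>v\<in>below z. \<exists>!u. u \<in> below y \<and> kpair E M u v \<in> G"
    and rel: "\<forall>u\<in>below y. \<forall>u'\<in>below y. \<forall>v\<in>below z. \<forall>v'\<in>below z.
        kpair E M u v \<in> G \<longrightarrow> kpair E M u' v' \<in> G \<longrightarrow> ((u, u') \<in> S \<longleftrightarrow> (v, v') \<in> S)"
    using \<open>iso_code G y z\<close> unfolding iso_code_below[OF y z] by blast+
  define h where "h u = (THE v. v \<in> below z \<and> kpair E M u v \<in> G)" for u
  have h: "h u \<in> below z" "kpair E M u (h u) \<in> G" if "u \<in> below y" for u
    unfolding h_def using theI'[OF total[rule_format, OF that]] by blast+
  have h_unique: "v = h u" if "u \<in> below y" "v \<in> below z" "kpair E M u v \<in> G" for u v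
    using total that h by blast
  have "inj_on h (below y)"
  proof (rule inj_onI)
    fix u u' assume u: "u \<in> below y" "u' \<in> below y" "h u = h u'"
    then show "u = u'"
      using onto h by metis
  qed
  moreover have "h ` below y = below z"
  proof (intro subset_antisym subsetI)
    fix v assume "v \<in> below z"
    then obtain u where "u \<in> below y" "kpair E M u v \<in> G"
      using onto by blast
    then show "v \<in> h ` below y"
      using h_unique \<open>v \<in> below z\<close> by blast
  qed (use h in blast)
  moreover have "(h u, h u') \<in> S \<longleftrightarrow> (u, u') \<in> S" if "u \<in> below y" "u' \<in> below y" for u u'
    using rel h that by blast
  ultimately have "rel_iso_betw S h (below y) (below z)"
    unfolding rel_iso_betw_def bij_betw_def by blast
  moreover have "G = kgraph h (below y)"
  proof (intro subset_antisym subsetI)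
    fix p assume "p \<in> G"
    then obtain u v where "u \<in> below y" "v \<in> below z" "p = kpair E M u v"
      using graph by blast
    then show "p \<in> kgraph h (below y)"
      unfolding kgraph_def using h_unique \<open>p \<in> G\<close> by blast
  qed (auto simp: kgraph_def h)
  ultimately show ?thesis
    using that by blast
qed

lemma kpair_inject_below:
  "y \<in> M0 \<Longrightarrow> z \<in> M0 \<Longrightarrow> u \<in> below y \<Longrightarrow> v \<in> below z \<Longrightarrow> u' \<in> below y \<Longrightarrow> v' \<in> below z \<Longrightarrow>
   kpair E M u v = kpair E M u' v' \<Longrightarrow> u = u' \<and> v = v'"
  using kpair_inject below_subset_M by (meson subsetD)

lemma iso_code_kgraph:
  assumes y: "y \<in> M0" and z: "z \<in> M0" and h: "rel_iso_betw S h (below y) (below z)"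
  shows "iso_code (kgraph h (below y)) y z"
proof -
  let ?G = "kgraph h (below y)"
  have hz: "h u \<in> below z" if "u \<in> below y" for u
    using rel_iso_betw_mem[OF h that] .
  have mem: "kpair E M u v \<in> ?G \<longleftrightarrow> v = h u" if "u \<in> below y" "v \<in> below z" for u v
    using that kpair_inject_below[OF y z] hz unfolding kgraph_def by blast
  have "\<forall>p\<in>?G. \<exists>u\<in>below y. \<exists>v\<in>below z. p = kpair E M u v"
    using hz unfolding kgraph_def by blast
  moreover have "\<forall>u\<in>below y. \<exists>!v. v \<in> below z \<and> kpair E M u v \<in> ?G"
    using hz mem by blast
  moreover have "\<exists>!u. u \<in> below y \<and> kpair E M u v \<in> ?G" if v: "v \<in> below z" for v
  proof -
    obtain u where "u \<in> below y" "v = h u"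
      using v rel_iso_betw_image[OF h] by blast
    then show ?thesis
      using v mem rel_iso_betw_inj_on[OF h] by (metis inj_onD)
  qed
  moreover have "\<forall>u\<in>below y. \<forall>u'\<in>below y. \<forall>v\<in>below z. \<forall>v'\<in>below z.
      kpair E M u v \<in> ?G \<longrightarrow> kpair E M u' v' \<in> ?G \<longrightarrow> ((u, u') \<in> S \<longleftrightarrow> (v, v') \<in> S)"
    using mem rel_iso_betw_rel_iff[OF h] by simp
  ultimately show ?thesis
    unfolding iso_code_below[OF y z] by blast
qed


definition glued_class :: "'a \<Rightarrow> 'a \<Rightarrow> 'a set" where
  "glued_class p q = {x \<in> M. x = kpair E M p q \<or>
     (\<exists>G\<in>C. \<exists>y w. (y, p) \<in> S \<and> (w, q) \<in> S \<and> iso_code G y w \<and> x \<in> G)}"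

lemma glued_class_in_C:
  assumes "p \<in> M" "q \<in> M"
  shows "glued_class p q \<in> C"
proof -
  let ?s = "\<lambda>n::nat. if n = 2 then q else p" and ?c = "\<lambda>n::nat. if n = 0 then M0 else R"
  have "assignment M C ?s ?c"
    unfolding assignment_def using assms M0_class R_class by auto
  moreover have "definable (\<lambda>s c. s 0 = kpair E M (s 1) (s 2) \<or>
      (\<exists>G\<in>C. \<exists>y\<in>M. \<exists>w\<in>M. kpair E M y (s 1) \<in> c 1 \<and> kpair E M w (s 2) \<in> c 1 \<and>
         model_iso (c 0) (c 1) G y w \<and> s 0 \<in> G))"
    apply (intro definable_disj definable_kpair_eq)
    apply (rule definable_ex_class[where J=2])
     apply (rule definable_ex_set[where i=3])
      apply (rule definable_ex_set[where i=4])
       apply (intro definable_conj definable_kpair_mem definable_model_iso definable_class_mem)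
    by simp_all
  ultimately have "{x \<in> M. x = kpair E M p q \<or>
      (\<exists>G\<in>C. \<exists>y\<in>M. \<exists>w\<in>M. kpair E M y p \<in> R \<and> kpair E M w q \<in> R \<and>
         model_iso M0 R G y w \<and> x \<in> G)} \<in> C"
    using class_of_definable[where i=0] by fastforce
  moreover have "(\<exists>G\<in>C. \<exists>y\<in>M. \<exists>w\<in>M. kpair E M y p \<in> R \<and> kpair E M w q \<in> R \<and>
         model_iso M0 R G y w \<and> x \<in> G) \<longleftrightarrow>
      (\<exists>G\<in>C. \<exists>y w. (y, p) \<in> S \<and> (w, q) \<in> S \<and> iso_code G y w \<and> x \<in> G)" for x
    using assms model_iso_iff_iso_code by (auto simp: crel_iff)
  ultimately show ?thesis
    unfolding glued_class_def by simp
qed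

lemma glued_class_subset_kgraph:
  assumes g: "rel_iso_betw S g (below p) (below q)" and rigid: "rigid_below p"
  shows "glued_class p q \<subseteq> kgraph g (below p)"
proof
  fix x assume "x \<in> glued_class p q"
  then consider "x = kpair E M p q"
    | G y w where "G \<in> C" "(y, p) \<in> S" "(w, q) \<in> S" "iso_code G y w" "x \<in> G"
    unfolding glued_class_def by blast
  then show "x \<in> kgraph g (below p)"
  proof cases
    case 1
    have "kpair E M p (g p) \<in> kgraph g (below p)"
      unfolding kgraph_def by simp
    then show ?thesis
      using 1 iso_root[OF g] by simp
  next
    case (2 G y w)
    have y: "y \<in> M0" "y \<in> below p" and w: "w \<in> M0"
      using S_M0[OF \<open>(y, p) \<in> S\<close>] S_M0[OF \<open>(w, q) \<in> S\<close>] child_in_below[OF \<open>(y, p) \<in> S\<close> below_self]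
      by simp_all
    obtain h where h: "rel_iso_betw S h (below y) (below w)" and G: "G = kgraph h (below y)"
      using iso_code_imp_graph[OF y(1) w \<open>iso_code G y w\<close>] .
    have "(g y, q) \<in> S"
      using rel_iso_betw_rel_iff[OF g y(2) below_self] \<open>(y, p) \<in> S\<close> iso_root[OF g] by simp
    moreover have "subtree_iso (g y) w"
      using subtree_iso_sym[OF subtree_iso_at[OF g y(2)]] h unfolding subtree_iso_def
      by (metis rel_iso_betw_comp)
    moreover have "rigid_below q"
      using rigid_below_iso[OF rigid] g unfolding subtree_iso_def by blast
    ultimately have "g y = w"
      using \<open>(w, q) \<in> S\<close> below_self unfolding rigid_below_def by blast
    then have "h u = g u" if "u \<in> below y" for u
      using iso_unique[OF rigid_below_mono[OF rigid y(2)] h] iso_restrict[OF g y(2)] that by simp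
    moreover obtain u where "u \<in> below y" "x = kpair E M u (h u)"
      using \<open>x \<in> G\<close> unfolding G kgraph_def by blast
    ultimately show ?thesis
      using below_mono[OF y(2)] unfolding kgraph_def by auto
  qed
qed

lemma kgraph_subset_glued_class:
  assumes p: "p \<in> M0" and q: "q \<in> M0" and g: "rel_iso_betw S g (below p) (below q)"
    and rigid: "rigid_below p"
    and children: "\<And>y. (y, p) \<in> S \<Longrightarrow> iso_in E M C M0 R y (g y)"
  shows "kgraph g (below p) \<subseteq> glued_class p q"
proof
  fix x assume "x \<in> kgraph g (below p)"
  then obtain t where t: "t \<in> below p" "x = kpair E M t (g t)"
    unfolding kgraph_def by blast
  have "t \<in> M" "g t \<in> M"
    using t(1) rel_iso_betw_mem[OF g t(1)] below_subset_M[OF p] below_subset_M[OF q] by blast+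
  then have "x \<in> M"
    using t(2) kpair_in_M by simp
  from t(1) show "x \<in> glued_class p q"
  proof (cases rule: below_branch_cases)
    case 1
    then show ?thesis
      using t(2) \<open>x \<in> M\<close> iso_root[OF g] unfolding glued_class_def by simp
  next
    case (2 y)
    have y: "y \<in> M0" "y \<in> below p"
      using S_M0[OF \<open>(y, p) \<in> S\<close>] child_in_below[OF \<open>(y, p) \<in> S\<close> below_self] by simp_all
    have gy: "(g y, q) \<in> S"
      using rel_iso_betw_rel_iff[OF g y(2) below_self] \<open>(y, p) \<in> S\<close> iso_root[OF g] by simp
    then have "g y \<in> M0"
      using S_M0 by blast
    obtain G where G: "G \<in> C" "iso_code G y (g y)"
      using children[OF \<open>(y, p) \<in> S\<close>] iso_in_iff_iso_code by blast
    obtain h where h: "rel_iso_betw S h (below y) (below (g y))" and "G = kgraph h (below y)"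
      using iso_code_imp_graph[OF y(1) \<open>g y \<in> M0\<close> G(2)] .
    moreover have "h t = g t"
      using iso_unique[OF rigid_below_mono[OF rigid y(2)] h iso_restrict[OF g y(2)] \<open>t \<in> below y\<close>] .
    ultimately have "x \<in> G"
      using t(2) \<open>t \<in> below y\<close> unfolding kgraph_def by (metis image_eqI)
    then show ?thesis
      unfolding glued_class_def using \<open>x \<in> M\<close> G \<open>(y, p) \<in> S\<close> gy by blast
  qed
qed

lemma iso_in_if_subtree_iso:
  "p \<in> M0 \<Longrightarrow> q \<in> M0 \<Longrightarrow> subtree_iso p q \<Longrightarrow> iso_in E M C M0 R p q"
  using wf_trancl[OF wf_crel_R]
proof (induction p arbitrary: q rule: wf_induct_rule)
  case (less p)
  obtain g where g: "rel_iso_betw S g (below p) (below q)"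
    using less.prems(3) unfolding subtree_iso_def by blast
  have rigid: "rigid_below p"
    unfolding rigid_below_def
  proof (intro ballI allI impI)
    fix t s s' assume t: "t \<in> below p" and s: "(s, t) \<in> S" "(s', t) \<in> S" "subtree_iso s s'"
    have "(s, p) \<in> S\<^sup>+"
      using s(1) t by (simp add: in_below_iff rtrancl_into_trancl2)
    moreover have M0: "s \<in> M0" "s' \<in> M0" "t \<in> M0"
      using S_M0[OF s(1)] S_M0[OF s(2)] by simp_all
    ultimately have "iso_in E M C M0 R s s'"
      using less.IH s(3) by blast
    then show "s = s'"
      using siblings_not_iso_in M0 s(1,2) by blast
  qed
  have "iso_in E M C M0 R y (g y)" if "(y, p) \<in> S" for y
  proof -
    have "y \<in> below p"
      using child_in_below[OF that below_self] .
    then have "g y \<in> M0" "subtree_iso y (g y)"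
      using rel_iso_betw_mem[OF g] below_subset_M0[OF less.prems(2)] subtree_iso_at[OF g] by blast+
    moreover have "y \<in> M0"
      using S_M0[OF that] by simp
    ultimately show ?thesis
      using less.IH that by blast
  qed
  then have "glued_class p q = kgraph g (below p)"
    using glued_class_subset_kgraph[OF g rigid] kgraph_subset_glued_class[OF less.prems(1,2) g rigid]
    by blast
  moreover have "glued_class p q \<in> C"
    using glued_class_in_C less.prems(1,2) M0_subset by blast
  ultimately show ?case
    using iso_code_kgraph[OF less.prems(1,2) g] iso_in_iff_iso_code by metis
qed

lemma iso_in_iff_subtree_iso:
  assumes "p \<in> M0" "q \<in> M0"
  shows "iso_in E M C M0 R p q \<longleftrightarrow> subtree_iso p q"
proof
  assume "iso_in E M C M0 R p q"
  then obtain G where "iso_code G p q"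
    using iso_in_iff_iso_code by blast
  then obtain h where "rel_iso_betw S h (below p) (below q)"
    using iso_code_imp_graph[OF assms] by blast
  then show "subtree_iso p q"
    unfolding subtree_iso_def by blast
qed (use assms iso_in_if_subtree_iso in blast)

lemma siblings_rigid:
  assumes "(s, t) \<in> S" "(s', t) \<in> S" "subtree_iso s s'"
  shows "s = s'"
proof -
  have M0: "s \<in> M0" "s' \<in> M0" "t \<in> M0"
    using S_M0[OF assms(1)] S_M0[OF assms(2)] by simp_all
  then have "iso_in E M C M0 R s s'"
    using iso_in_iff_subtree_iso assms(3) by blast
  then show ?thesis
    using siblings_not_iso_in M0 assms(1,2) by blast
qed


section \<open>The quotient structure\<close>

lemma iso_class_eq: "b \<in> M0 \<Longrightarrow> iso_class E M C M0 R b = {b' \<in> M0. subtree_iso b' b}"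
  unfolding iso_class_def using iso_in_iff_subtree_iso by blast

lemma wf_crel_W: "wf (crel E M W)"
  using beta choice unfolding beta_model_def global_wo_def by blast

lemma crel_W_total: "x \<in> M \<Longrightarrow> y \<in> M \<Longrightarrow> x \<noteq> y \<Longrightarrow> (x, y) \<in> crel E M W \<or> (y, x) \<in> crel E M W"
  using choice unfolding global_wo_def by blast

lemma rep_least:
  assumes b: "b \<in> M0"
  shows "rep E M C W M0 R b \<in> iso_class E M C M0 R b"
proof -
  let ?K = "iso_class E M C M0 R b"
  have "b \<in> ?K" "?K \<subseteq> M"
    using iso_class_eq[OF b] b subtree_iso_refl M0_subset by auto
  obtain c where c: "c \<in> ?K" "\<And>d. (d, c) \<in> crel E M W \<Longrightarrow> d \<notin> ?K"
    using wfE_min[OF wf_crel_W \<open>b \<in> ?K\<close>] by blast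
  have "rep E M C W M0 R b = c"
    unfolding rep_def
  proof (rule the_equality)
    show "c \<in> ?K \<and> (\<forall>d\<in>?K. d \<noteq> c \<longrightarrow> (c, d) \<in> crel E M W)"
      using c crel_W_total \<open>?K \<subseteq> M\<close> by blast
  next
    fix c' assume c': "c' \<in> ?K \<and> (\<forall>d\<in>?K. d \<noteq> c' \<longrightarrow> (c', d) \<in> crel E M W)"
    show "c' = c"
    proof (rule ccontr)
      assume "c' \<noteq> c"
      then have "(c', c) \<in> crel E M W"
        using c' c(1) by auto
      then show False
        using c(2) c' by blast
    qed
  qed
  then show ?thesis
    using c(1) by simp
qed

lemma rep_in_M0: "b \<in> M0 \<Longrightarrow> rep E M C W M0 R b \<in> M0"
  using rep_least unfolding iso_class_def by blast

lemma subtree_iso_rep: "b \<in> M0 \<Longrightarrow> subtree_iso (rep E M C W M0 R b) b"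
  using rep_least iso_class_eq by blast

lemma rep_eq_if_subtree_iso:
  assumes "b \<in> M0" "b' \<in> M0" "subtree_iso b b'"
  shows "rep E M C W M0 R b = rep E M C W M0 R b'"
proof -
  have "iso_class E M C M0 R b = iso_class E M C M0 R b'"
    using iso_class_eq assms subtree_iso_sym subtree_iso_trans by blast
  then show ?thesis
    unfolding rep_def by simp
qed

lemma qcarrier_rep:
  assumes "x \<in> qcarrier E M C W M0 R"
  shows "x \<in> M0" "rep E M C W M0 R x = x"
proof -
  obtain b where b: "b \<in> M0" "x = rep E M C W M0 R b"
    using assms unfolding qcarrier_def by blast
  then show "x \<in> M0"
    using rep_in_M0 by simp
  then show "rep E M C W M0 R x = x"
    using rep_eq_if_subtree_iso subtree_iso_rep b by metis
qed

lemma qrel_subset: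
  "qrel E M C W M0 R \<subseteq> {(x, y). subtree_iso x y} O S O {(x, y). subtree_iso x y}"
proof
  fix z assume "z \<in> qrel E M C W M0 R"
  then obtain x y b c where "z = (x, y)" "x \<in> qcarrier E M C W M0 R" "y \<in> qcarrier E M C W M0 R"
    "b \<in> iso_class E M C M0 R x" "c \<in> iso_class E M C M0 R y" "(b, c) \<in> S"
    unfolding qrel_def by blast
  then show "z \<in> {(x, y). subtree_iso x y} O S O {(x, y). subtree_iso x y}"
    using qcarrier_rep iso_class_eq subtree_iso_sym by blast
qed

lemma wf_qrel: "wf (qrel E M C W M0 R)"
  using wf_subset[OF wf_subtree_iso_S qrel_subset] .

lemma qrel_rep_child:
  assumes "x \<in> qcarrier E M C W M0 R" "(c, x) \<in> S"
  shows "(rep E M C W M0 R c, x) \<in> qrel E M C W M0 R"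
proof -
  have c: "c \<in> M0"
    using S_M0 assms(2) by blast
  have "c \<in> iso_class E M C M0 R (rep E M C W M0 R c)"
    using iso_class_eq[OF rep_in_M0[OF c]] c subtree_iso_sym[OF subtree_iso_rep[OF c]] by blast
  moreover have "x \<in> iso_class E M C M0 R x"
    using iso_class_eq qcarrier_rep[OF assms(1)] subtree_iso_refl by blast
  moreover have "rep E M C W M0 R c \<in> qcarrier E M C W M0 R"
    unfolding qcarrier_def using c by blast
  ultimately show ?thesis
    unfolding qrel_def using assms by blast
qed

lemma children_match_if_same_qrel_predecessors:
  assumes x: "x \<in> qcarrier E M C W M0 R"
    and pred: "\<forall>v\<in>qcarrier E M C W M0 R. (v, x) \<in> qrel E M C W M0 R \<longrightarrow> (v, y) \<in> qrel E M C W M0 R"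
    and "(c, x) \<in> S"
  shows "\<exists>d. (d, y) \<in> S \<and> subtree_iso c d"
proof -
  let ?r = "rep E M C W M0 R c"
  have c: "c \<in> M0"
    using S_M0 \<open>(c, x) \<in> S\<close> by blast
  have "?r \<in> qcarrier E M C W M0 R"
    unfolding qcarrier_def using c by blast
  then have "(?r, y) \<in> qrel E M C W M0 R"
    using pred qrel_rep_child[OF x \<open>(c, x) \<in> S\<close>] by blast
  then obtain b b' where "subtree_iso ?r b" "(b, b') \<in> S" "subtree_iso b' y"
    using qrel_subset by blast
  moreover obtain d where "(d, y) \<in> S" "subtree_iso b d"
    using subtree_iso_child calculation(2,3) by blast
  ultimately show ?thesis
    using subtree_iso_sym[OF subtree_iso_rep[OF c]] subtree_iso_trans by blast
qed

lemma extensional_qrel: "extensional_rel (qcarrier E M C W M0 R) (qrel E M C W M0 R)"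
  unfolding extensional_rel_def
proof (intro ballI impI)
  fix x y
  assume x: "x \<in> qcarrier E M C W M0 R" and y: "y \<in> qcarrier E M C W M0 R"
    and same: "\<forall>v\<in>qcarrier E M C W M0 R. (v, x) \<in> qrel E M C W M0 R \<longleftrightarrow> (v, y) \<in> qrel E M C W M0 R"
  have "subtree_iso x y"
  proof (rule subtree_iso_if_children_match)
    show "\<exists>d. (d, y) \<in> S \<and> subtree_iso c d" if "(c, x) \<in> S" for c
      using children_match_if_same_qrel_predecessors[OF x _ that] same by blast
    show "\<exists>c. (c, x) \<in> S \<and> subtree_iso c d" if "(d, y) \<in> S" for d
      using children_match_if_same_qrel_predecessors[OF y _ that] same subtree_iso_sym by blast
  qed (rule siblings_rigid)
  then show "x = y"
    using rep_eq_if_subtree_iso qcarrier_rep x y by metis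
qed

end

theorem lemma6:
  fixes E :: "'a \<Rightarrow> 'a \<Rightarrow> bool" and M :: "'a set" and C :: "'a set set"
    and M0 R W :: "'a set" and a :: 'a
  assumes "wfP E"
    and "transitive_in E M"
    and "MK_star E M C"
    and "beta_model E M C"
    and "coding_pair E M C M0 R a"
    and "global_wo E M C W"
  shows "extensional_rel (qcarrier E M C W M0 R) (qrel E M C W M0 R)
         \<and> wf (qrel E M C W M0 R)"
proof -
  interpret coding_context E M C M0 R W a
    using assms(3-6) by unfold_locales
  show ?thesis
    using extensional_qrel wf_qrel by blast
qed

end
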